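(* Let $1<p<\infty$, $1/p+1/q=1$, let $f\in L_p(\mathbb{R})\cap L_1(\mathbb{R})$, and let $(f_i)_{i=1}^\infty$ be a sequence of uniformly discrete translates of $f$, i.e. $f_i=f_{(\lambda_i)}$ where $\{\lambda_i:i\in\mathbb{N}\}$ consists of distinct points and is uniformly discrete. Then $(f_i)_{i=1}^\infty$ is not a fundamental bounded minimal system for $L_p(\mathbb{R})$. Furthermore, there is no sequence $(g_i)_{i=1}^\infty\subseteq L_q(\mathbb{R})$ such that $(f_i,g_i)_{i=1}^\infty$ is a (Schauder) frame for $L_p(\mathbb{R})$.
   Context: $f_{(\lambda)}(x)=f(x-\lambda)$. $\Lambda\subseteq\mathbb{R}$ is uniformly discrete if $\inf\{|\lambda-\lambda'|:\lambda\neq\lambda'\in\Lambda\}>0$. A sequence $(x_i)$ in a Banach space $X$ is a minimal system if there are $x_i^*\in X^*$ with $x_i^*(x_j)=\delta_{ij}$; it is a bounded minimal system if moreover the $x_i^*$ can be chosen with $\sup_i\|x_i\|\|x_i^*\|<\infty$; it is fundamental if its closed linear span is $X$. A (Schauder) frame for a Banach space $X$ is a sequence $(x_i,x_i^* )\subseteq X\times X^*$ such that $x=\sum_{i=1}^\infty x_i^*(x)x_i$ (norm convergence) for every $x\in X$; here $g\in L_q(\mathbb{R})$ acts on $L_p(\mathbb{R})$ via $\langle h,g\rangle=\int hg$. *)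

theory Defs
  imports "HOL-Analysis.Analysis"
begin

text \<open>Real-valued L_p(R) with respect to Lebesgue (Borel) measure; functions are
  representatives of equivalence classes.\<close>

definition in_Lp :: "real \<Rightarrow> (real \<Rightarrow> real) \<Rightarrow> bool" where
  "in_Lp p h \<longleftrightarrow> h \<in> borel_measurable lborel \<and> integrable lborel (\<lambda>x. \<bar>h x\<bar> powr p)"

definition lp_norm :: "real \<Rightarrow> (real \<Rightarrow> real) \<Rightarrow> real" where
  "lp_norm p h = (\<integral>x. \<bar>h x\<bar> powr p \<partial>lborel) powr (1 / p)"

definition translate :: "(real \<Rightarrow> real) \<Rightarrow> real \<Rightarrow> (real \<Rightarrow> real)" where
  "translate f a = (\<lambda>x. f (x - a))"

definition uniformly_discrete_seq :: "(nat \<Rightarrow> real) \<Rightarrow> bool" where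
  "uniformly_discrete_seq lam \<longleftrightarrow>
     (\<exists>\<delta>>0. \<forall>i j. i \<noteq> j \<longrightarrow> \<delta> \<le> \<bar>lam i - lam j\<bar>)"

definition Lp_dual :: "real \<Rightarrow> ((real \<Rightarrow> real) \<Rightarrow> real) \<Rightarrow> bool" where
  "Lp_dual p \<phi> \<longleftrightarrow>
     (\<forall>h k a b. in_Lp p h \<longrightarrow> in_Lp p k \<longrightarrow>
        \<phi> (\<lambda>x. a * h x + b * k x) = a * \<phi> h + b * \<phi> k) \<and>
     (\<exists>C. \<forall>h. in_Lp p h \<longrightarrow> \<bar>\<phi> h\<bar> \<le> C * lp_norm p h)"

definition dual_norm :: "real \<Rightarrow> ((real \<Rightarrow> real) \<Rightarrow> real) \<Rightarrow> real" where
  "dual_norm p \<phi> = Inf {C. 0 \<le> C \<and> (\<forall>h. in_Lp p h \<longrightarrow> \<bar>\<phi> h\<bar> \<le> C * lp_norm p h)}"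

definition bounded_minimal_Lp :: "real \<Rightarrow> (nat \<Rightarrow> real \<Rightarrow> real) \<Rightarrow> bool" where
  "bounded_minimal_Lp p x \<longleftrightarrow>
     (\<exists>xs :: nat \<Rightarrow> (real \<Rightarrow> real) \<Rightarrow> real.
        (\<forall>i. Lp_dual p (xs i)) \<and>
        (\<forall>i j. xs i (x j) = (if i = j then 1 else 0)) \<and>
        (\<exists>M. \<forall>i. lp_norm p (x i) * dual_norm p (xs i) \<le> M))"

definition fundamental_Lp :: "real \<Rightarrow> (nat \<Rightarrow> real \<Rightarrow> real) \<Rightarrow> bool" where
  "fundamental_Lp p x \<longleftrightarrow>
     (\<forall>h. in_Lp p h \<longrightarrow> (\<forall>\<epsilon>>0. \<exists>n c. lp_norm p (\<lambda>t. h t - (\<Sum>i<n. c i * x i t)) < \<epsilon>))"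

definition Lp_frame :: "real \<Rightarrow> (nat \<Rightarrow> real \<Rightarrow> real) \<Rightarrow> (nat \<Rightarrow> real \<Rightarrow> real) \<Rightarrow> bool" where
  "Lp_frame p x g \<longleftrightarrow>
     (\<forall>h. in_Lp p h \<longrightarrow>
        ((\<lambda>n. lp_norm p (\<lambda>t. h t - (\<Sum>i<n. (\<integral>s. h s * g i s \<partial>lborel) * x i t)))
           \<longlonglongrightarrow> 0))"

end

theory Submission
  imports Defs
begin

text \<open>Let \<open>\<delta>\<close> separate the points \<open>\<lambda>\<^sub>j\<close>. The translates \<open>f\<^sub>j = f(\<cdot> - \<lambda>\<^sub>j)\<close> of an
  integrable \<open>f\<close> put total mass at most \<open>\<parallel>f\<parallel>\<^sub>1 (1/\<delta> + 1)\<close> on every unit interval, while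
  expanding indicators of intervals forces large mass there.

  If \<open>(f\<^sub>j)\<close> is fundamental with biorthogonal functionals bounded by \<open>K\<close>, approximating the
  indicator of each of \<open>m\<close> pieces of length \<open>1/m\<close> and integrating over that piece shows that
  the \<open>f\<^sub>j\<close> put mass of order \<open>m powr (1 / p) / K\<close> on the unit interval.

  If \<open>(f\<^sub>j, g\<^sub>j)\<close> is a frame, then \<open>\<langle>h, g\<^sub>n\<rangle> f\<^sub>n\<close> is the difference of consecutive
  remainders and \<open>\<parallel>f\<^sub>n\<parallel>\<^sub>p = \<parallel>f\<parallel>\<^sub>p > 0\<close>, so \<open>\<langle>h, g\<^sub>n\<rangle> \<rightarrow> 0\<close> for every \<open>h \<in> L\<^sub>p\<close>. On the
  other hand, expanding the indicators of the pieces of a far-out unit interval shows that some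
  piece \<open>J\<close> has \<open>|\<langle>1\<^sub>J, g\<^sub>i\<rangle>| \<ge> \<kappa>\<close> for an arbitrarily late \<open>i\<close>. Choosing such pieces
  \<open>J\<^sub>n\<close> of measure \<open>2\<^sup>-\<^sup>n\<close> inductively, far enough to the right that earlier and later
  pieces contribute little, their union \<open>U\<close> has finite measure and \<open>|\<langle>1\<^sub>U, g\<^bsub>i(n)\<^esub>\<rangle>| \<ge> \<kappa>/2\<close>
  with \<open>i(n) \<rightarrow> \<infinity>\<close>, a contradiction.\<close>

section \<open>Elementary facts about \<open>L\<^sub>p\<close>\<close>

lemma integral_translate_lborel:
  fixes F :: "real \<Rightarrow> real"
  shows "(\<integral>x. F (x - a) \<partial>lborel) = (\<integral>x. F x \<partial>lborel)"
  using lborel_integral_real_affine[of 1 F "-a"] by simp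

lemma integrable_translate_lborel_iff:
  fixes F :: "real \<Rightarrow> real"
  shows "integrable lborel (\<lambda>x. F (x - a)) \<longleftrightarrow> integrable lborel F"
  using lborel_integrable_real_affine_iff[of 1 F "-a"] by simp

lemma in_Lp_translate:
  assumes "in_Lp p h"
  shows "in_Lp p (translate h a)"
proof -
  have [measurable]: "h \<in> borel_measurable lborel" using assms by (simp add: in_Lp_def)
  show ?thesis
    using assms integrable_translate_lborel_iff[of "\<lambda>x. \<bar>h x\<bar> powr p" a]
    unfolding in_Lp_def translate_def by simp
qed

lemma integral_powr_translate:
  "(\<integral>x. \<bar>translate h a x\<bar> powr p \<partial>lborel) = (\<integral>x. \<bar>h x\<bar> powr p \<partial>lborel)"
  unfolding translate_def by (rule integral_translate_lborel)

lemma lp_norm_translate: "lp_norm p (translate h a) = lp_norm p h"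
  unfolding lp_norm_def integral_powr_translate ..

lemma lp_norm_nonneg: "0 \<le> lp_norm p h"
  unfolding lp_norm_def by simp

lemma lp_norm_powr:
  "0 < p \<Longrightarrow> lp_norm p h powr p = (\<integral>x. \<bar>h x\<bar> powr p \<partial>lborel)"
  unfolding lp_norm_def by (simp add: powr_powr)

lemma powr_abs_add_le:
  fixes u v p :: real
  assumes "0 < p"
  shows "\<bar>u + v\<bar> powr p \<le> 2 powr p * (\<bar>u\<bar> powr p + \<bar>v\<bar> powr p)"
proof -
  have "\<bar>u + v\<bar> powr p \<le> (2 * max \<bar>u\<bar> \<bar>v\<bar>) powr p"
    using assms by (intro powr_mono2) auto
  also have "\<dots> = 2 powr p * max \<bar>u\<bar> \<bar>v\<bar> powr p" by (simp add: powr_mult)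
  also have "max \<bar>u\<bar> \<bar>v\<bar> powr p \<le> \<bar>u\<bar> powr p + \<bar>v\<bar> powr p"
    by (cases "\<bar>u\<bar> \<le> \<bar>v\<bar>") (auto simp: max_def)
  finally show ?thesis by (simp add: mult_left_mono)
qed

lemma in_Lp_lincomb:
  assumes p: "0 < p" and h: "in_Lp p h" and k: "in_Lp p k"
  shows "in_Lp p (\<lambda>x. a * h x + b * k x)"
  unfolding in_Lp_def
proof
  have [measurable]: "h \<in> borel_measurable lborel" "k \<in> borel_measurable lborel"
    using h k by (auto simp: in_Lp_def)
  show "(\<lambda>x. a * h x + b * k x) \<in> borel_measurable lborel" by measurable
  have ih: "integrable lborel (\<lambda>x. \<bar>h x\<bar> powr p)" "integrable lborel (\<lambda>x. \<bar>k x\<bar> powr p)"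
    using h k by (auto simp: in_Lp_def)
  show "integrable lborel (\<lambda>x. \<bar>a * h x + b * k x\<bar> powr p)"
  proof (rule Bochner_Integration.integrable_bound)
    show "integrable lborel
        (\<lambda>x. 2 powr p * (\<bar>a\<bar> powr p * \<bar>h x\<bar> powr p + \<bar>b\<bar> powr p * \<bar>k x\<bar> powr p))"
      using ih by auto
    show "(\<lambda>x. \<bar>a * h x + b * k x\<bar> powr p) \<in> borel_measurable lborel" by measurable
    show "AE x in lborel. norm (\<bar>a * h x + b * k x\<bar> powr p)
        \<le> norm (2 powr p * (\<bar>a\<bar> powr p * \<bar>h x\<bar> powr p + \<bar>b\<bar> powr p * \<bar>k x\<bar> powr p))"
      using powr_abs_add_le[OF p, of "a * h _" "b * k _"] by (auto simp: abs_mult powr_mult)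
  qed
qed

lemma in_Lp_diff:
  "0 < p \<Longrightarrow> in_Lp p h \<Longrightarrow> in_Lp p k \<Longrightarrow> in_Lp p (\<lambda>x. h x - k x)"
  using in_Lp_lincomb[of p h k 1 "-1"] by simp

lemma in_Lp_sum:
  fixes n :: nat
  assumes p: "0 < p" and F: "\<And>i. i < n \<Longrightarrow> in_Lp p (F i)"
  shows "in_Lp p (\<lambda>x. \<Sum>i<n. c i * F i x)"
  using F
proof (induction n)
  case 0
  then show ?case using p by (simp add: in_Lp_def)
next
  case (Suc n)
  have "in_Lp p (\<lambda>x. 1 * (\<Sum>i<n. c i * F i x) + c n * F n x)"
    using Suc by (intro in_Lp_lincomb[OF p]) auto
  then show ?case by simp
qed

lemma in_Lp_indicator:
  assumes "0 < p" and "S \<in> sets lborel" and "emeasure lborel S < \<infinity>"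
  shows "in_Lp p (indicator S :: real \<Rightarrow> real)"
    and "lp_norm p (indicator S) = measure lborel S powr (1 / p)"
proof -
  have eq: "(\<lambda>x. \<bar>indicator S x :: real\<bar> powr p) = indicator S"
    using assms(1) by (auto simp: indicator_def)
  show "in_Lp p (indicator S :: real \<Rightarrow> real)"
    unfolding in_Lp_def eq using assms by (auto simp: integrable_indicator_iff)
  show "lp_norm p (indicator S) = measure lborel S powr (1 / p)"
    unfolding lp_norm_def eq using assms by simp
qed

lemma Lp_dual_sum:
  fixes n :: nat
  assumes \<phi>: "Lp_dual p \<phi>" and p: "0 < p" and F: "\<And>i. i < n \<Longrightarrow> in_Lp p (F i)"
  shows "\<phi> (\<lambda>x. \<Sum>i<n. c i * F i x) = (\<Sum>i<n. c i * \<phi> (F i))"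
  using F
proof (induction n)
  case 0
  have "in_Lp p (\<lambda>x. 0)" using p by (simp add: in_Lp_def)
  then have "\<phi> (\<lambda>x. 0 * 0 + 0 * 0) = 0 * \<phi> (\<lambda>x. 0) + 0 * \<phi> (\<lambda>x. 0)"
    using \<phi> unfolding Lp_dual_def by blast
  then show ?case by simp
next
  case (Suc n)
  have "in_Lp p (\<lambda>x. \<Sum>i<n. c i * F i x)" "in_Lp p (F n)"
    using Suc.prems by (auto intro: in_Lp_sum[OF p])
  then have "\<phi> (\<lambda>x. 1 * (\<Sum>i<n. c i * F i x) + c n * F n x)
      = 1 * \<phi> (\<lambda>x. \<Sum>i<n. c i * F i x) + c n * \<phi> (F n)"
    using \<phi> unfolding Lp_dual_def by blast
  then show ?case using Suc by simp
qed

lemma abs_le_dual_norm: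
  assumes \<phi>: "Lp_dual p \<phi>" and h: "in_Lp p h"
  shows "\<bar>\<phi> h\<bar> \<le> dual_norm p \<phi> * lp_norm p h" and "0 \<le> dual_norm p \<phi>"
proof -
  define D where "D = {C. 0 \<le> C \<and> (\<forall>h. in_Lp p h \<longrightarrow> \<bar>\<phi> h\<bar> \<le> C * lp_norm p h)}"
  obtain C where C: "\<And>h. in_Lp p h \<Longrightarrow> \<bar>\<phi> h\<bar> \<le> C * lp_norm p h"
    using \<phi> unfolding Lp_dual_def by blast
  have "max C 0 \<in> D" unfolding D_def
  proof (intro CollectI conjI allI impI)
    fix h assume "in_Lp p h"
    then have "\<bar>\<phi> h\<bar> \<le> C * lp_norm p h" by (rule C)
    also have "\<dots> \<le> max C 0 * lp_norm p h" by (intro mult_right_mono lp_norm_nonneg) simp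
    finally show "\<bar>\<phi> h\<bar> \<le> max C 0 * lp_norm p h" .
  qed simp
  then have ne: "D \<noteq> {}" by auto
  have dn: "dual_norm p \<phi> = Inf D" unfolding dual_norm_def D_def ..
  show "0 \<le> dual_norm p \<phi>" unfolding dn using ne by (intro cInf_greatest) (auto simp: D_def)
  show "\<bar>\<phi> h\<bar> \<le> dual_norm p \<phi> * lp_norm p h"
  proof (cases "lp_norm p h = 0")
    case True
    have "\<bar>\<phi> h\<bar> \<le> max C 0 * lp_norm p h" using \<open>max C 0 \<in> D\<close> h unfolding D_def by blast
    then show ?thesis using True by simp
  next
    case False
    then have pos: "0 < lp_norm p h" using lp_norm_nonneg[of p h] by simp
    have "\<bar>\<phi> h\<bar> / lp_norm p h \<le> Inf D"
    proof (rule cInf_greatest[OF ne])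
      fix C' assume "C' \<in> D"
      then have "\<bar>\<phi> h\<bar> \<le> C' * lp_norm p h" using h unfolding D_def by blast
      then show "\<bar>\<phi> h\<bar> / lp_norm p h \<le> C'" using pos by (simp add: divide_le_eq)
    qed
    then show ?thesis using pos dn by (simp add: divide_le_eq)
  qed
qed

lemma abs_le_eps_plus_powr:
  fixes u e p :: real
  assumes "0 < e" and "1 \<le> p"
  shows "\<bar>u\<bar> \<le> e + e powr (1 - p) * \<bar>u\<bar> powr p"
proof (cases "\<bar>u\<bar> \<le> e")
  case True
  then show ?thesis by (simp add: add_increasing2)
next
  case False
  then have u: "e < \<bar>u\<bar>" by simp
  have "\<bar>u\<bar> = \<bar>u\<bar> powr p * \<bar>u\<bar> powr (1 - p)"
    using u assms by (simp add: powr_add[symmetric])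
  also have "\<dots> \<le> \<bar>u\<bar> powr p * e powr (1 - p)"
    using u assms by (intro mult_left_mono powr_mono2') auto
  finally show ?thesis using assms by (simp add: mult.commute add_increasing)
qed

lemma in_Lp_integrable_on:
  assumes p: "1 \<le> p" and u: "in_Lp p u"
    and W: "W \<in> sets lborel" "emeasure lborel W < \<infinity>"
  shows "integrable lborel (\<lambda>x. \<bar>u x\<bar> * indicator W x)"
    and "integrable lborel (\<lambda>x. indicator W x * u x)"
proof -
  have [measurable]: "u \<in> borel_measurable lborel" "W \<in> sets borel"
    using u W by (auto simp: in_Lp_def)
  have "integrable lborel (\<lambda>x. indicator W x + \<bar>u x\<bar> powr p * indicator W x)"
    using u W by (intro Bochner_Integration.integrable_add integrable_real_mult_indicator)
      (auto simp: in_Lp_def integrable_indicator_iff)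
  then show int_abs: "integrable lborel (\<lambda>x. \<bar>u x\<bar> * indicator W x)"
    by (rule Bochner_Integration.integrable_bound)
      (use abs_le_eps_plus_powr[OF zero_less_one p] in \<open>auto simp: indicator_def\<close>)
  show "integrable lborel (\<lambda>x. indicator W x * u x)"
    by (rule Bochner_Integration.integrable_bound[OF int_abs]) (auto simp: indicator_def)
qed

lemma integral_abs_indicator_le:
  assumes p: "1 \<le> p" and e: "0 < e" and u: "in_Lp p u"
    and W: "W \<in> sets lborel" "emeasure lborel W < \<infinity>"
  shows "(\<integral>x. \<bar>u x\<bar> * indicator W x \<partial>lborel)
    \<le> e * measure lborel W + e powr (1 - p) * (\<integral>x. \<bar>u x\<bar> powr p * indicator W x \<partial>lborel)"
proof -
  have iW: "integrable lborel (indicator W :: real \<Rightarrow> real)"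
    using W by (simp add: integrable_indicator_iff)
  have iu: "integrable lborel (\<lambda>x. \<bar>u x\<bar> powr p * indicator W x)"
    using u W by (intro integrable_real_mult_indicator) (auto simp: in_Lp_def)
  have "(\<integral>x. \<bar>u x\<bar> * indicator W x \<partial>lborel)
      \<le> (\<integral>x. e * indicator W x + e powr (1 - p) * (\<bar>u x\<bar> powr p * indicator W x) \<partial>lborel)"
  proof (rule integral_mono)
    show "integrable lborel (\<lambda>x. e * indicator W x + e powr (1 - p) * (\<bar>u x\<bar> powr p * indicator W x))"
      using iW iu by auto
    show "\<bar>u x\<bar> * indicator W x \<le> e * indicator W x + e powr (1 - p) * (\<bar>u x\<bar> powr p * indicator W x)"
      for x using abs_le_eps_plus_powr[OF e p, of "u x"] by (auto simp: indicator_def)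
  qed (rule in_Lp_integrable_on(1)[OF p u W])
  also have "\<dots> = e * measure lborel W + e powr (1 - p) * (\<integral>x. \<bar>u x\<bar> powr p * indicator W x \<partial>lborel)"
    using iW iu W by simp
  finally show ?thesis .
qed

lemma abs_integral_indicator_le_integral_abs:
  fixes u :: "real \<Rightarrow> real"
  shows "\<bar>\<integral>x. indicator W x * u x \<partial>lborel\<bar> \<le> (\<integral>x. \<bar>u x\<bar> * indicator W x \<partial>lborel)"
proof -
  have "\<bar>\<integral>x. indicator W x * u x \<partial>lborel\<bar> \<le> (\<integral>x. \<bar>indicator W x * u x\<bar> \<partial>lborel)"
    by (rule integral_abs_bound)
  also have "\<dots> = (\<integral>x. \<bar>u x\<bar> * indicator W x \<partial>lborel)"
    by (intro Bochner_Integration.integral_cong) (auto simp: indicator_def)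
  finally show ?thesis .
qed

lemma abs_integral_indicator_le:
  assumes p: "1 \<le> p" and e: "0 < e" and u: "in_Lp p u"
    and W: "W \<in> sets lborel" "emeasure lborel W < \<infinity>"
  shows "\<bar>\<integral>x. indicator W x * u x \<partial>lborel\<bar>
    \<le> e * measure lborel W + e powr (1 - p) * (\<integral>x. \<bar>u x\<bar> powr p \<partial>lborel)"
proof -
  have "(\<integral>x. \<bar>u x\<bar> powr p * indicator W x \<partial>lborel) \<le> (\<integral>x. \<bar>u x\<bar> powr p \<partial>lborel)"
    using u W by (intro integral_mono integrable_real_mult_indicator) (auto simp: in_Lp_def indicator_def)
  then show ?thesis
    using order_trans[OF abs_integral_indicator_le_integral_abs integral_abs_indicator_le[OF p e u W]]
    by (smt (verit) e powr_ge_zero mult_left_mono)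
qed

section \<open>Translates on intervals\<close>

lemma card_separated_le:
  fixes S :: "real set"
  assumes "finite S" and "0 < \<delta>" and sep: "\<forall>x\<in>S. \<forall>y\<in>S. x \<noteq> y \<longrightarrow> \<delta> \<le> \<bar>x - y\<bar>"
    and S: "S \<subseteq> {a..b}" and "a \<le> b"
  shows "real (card S) \<le> (b - a) / \<delta> + 1"
proof -
  define cell where "cell x = \<lfloor>(x - a) / \<delta>\<rfloor>" for x
  have "inj_on cell S"
  proof (rule inj_onI)
    fix x y assume xy: "x \<in> S" "y \<in> S" "cell x = cell y"
    have "\<bar>(x - a) / \<delta> - (y - a) / \<delta>\<bar> < 1"
      using floor_correct[of "(x - a) / \<delta>"] floor_correct[of "(y - a) / \<delta>"] xy(3)
      unfolding cell_def[symmetric] by (simp add: abs_less_iff)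
    moreover have "(x - a) / \<delta> - (y - a) / \<delta> = (x - y) / \<delta>"
      using \<open>0 < \<delta>\<close> by (simp add: field_simps)
    ultimately have "\<bar>x - y\<bar> / \<delta> < 1"
      using \<open>0 < \<delta>\<close> by (simp only: abs_div_pos)
    then have "\<bar>x - y\<bar> < \<delta>"
      using \<open>0 < \<delta>\<close> by (simp only: divide_less_eq_1_pos)
    then show "x = y"
      using sep xy(1,2) by (auto simp: not_le[symmetric])
  qed
  moreover have "cell ` S \<subseteq> {0..\<lfloor>(b - a) / \<delta>\<rfloor>}"
  proof
    fix z assume "z \<in> cell ` S"
    then obtain x where x: "x \<in> S" "z = cell x" by blast
    have "a \<le> x" "x \<le> b" using S x(1) by auto
    then have "0 \<le> (x - a) / \<delta>" "(x - a) / \<delta> \<le> (b - a) / \<delta>"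
      using \<open>0 < \<delta>\<close> by (simp_all add: divide_right_mono)
    then show "z \<in> {0..\<lfloor>(b - a) / \<delta>\<rfloor>}" unfolding x(2) cell_def by (simp add: floor_mono)
  qed
  ultimately have "card S \<le> card {0..\<lfloor>(b - a) / \<delta>\<rfloor>}"
    by (intro card_inj_on_le) auto
  then have "real (card S) \<le> real (nat (\<lfloor>(b - a) / \<delta>\<rfloor> + 1))" by simp
  also have "\<dots> = real_of_int \<lfloor>(b - a) / \<delta>\<rfloor> + 1"
    using \<open>a \<le> b\<close> \<open>0 < \<delta>\<close> by simp
  also have "\<dots> \<le> (b - a) / \<delta> + 1" by simp
  finally show ?thesis .
qed

lemma sum_indicator_translates_le:
  fixes lam :: "nat \<Rightarrow> real"
  assumes \<delta>: "0 < \<delta>" and sep: "\<forall>i j. i \<noteq> j \<longrightarrow> \<delta> \<le> \<bar>lam i - lam j\<bar>" and r: "0 \<le> r"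
  shows "(\<Sum>i<n. indicator {c..<c+r} (s + lam i) :: real) \<le> r / \<delta> + 1"
proof -
  define S where "S = lam ` {i\<in>{..<n}. s + lam i \<in> {c..<c+r}}"
  have "inj lam"
    using sep \<delta> by (intro injI) (metis abs_zero diff_self not_le)
  then have "(\<Sum>i<n. indicator {c..<c+r} (s + lam i) :: real) = real (card S)"
    unfolding S_def by (simp add: indicator_def sum.If_cases Int_def card_image inj_on_subset)
  also have "\<dots> \<le> ((c + r - s) - (c - s)) / \<delta> + 1"
    using sep \<delta> r unfolding S_def by (intro card_separated_le) (auto; metis)+
  finally show ?thesis by simp
qed

lemma sum_integral_translates_le:
  fixes f :: "real \<Rightarrow> real" and lam :: "nat \<Rightarrow> real"
  assumes f: "integrable lborel f" and \<delta>: "0 < \<delta>"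
    and sep: "\<forall>i j. i \<noteq> j \<longrightarrow> \<delta> \<le> \<bar>lam i - lam j\<bar>" and r: "0 \<le> r"
  shows "(\<Sum>i<n. \<integral>t. \<bar>f (t - lam i)\<bar> * indicator {c..<c+r} t \<partial>lborel)
    \<le> (\<integral>t. \<bar>f t\<bar> \<partial>lborel) * (r / \<delta> + 1)"
proof -
  have [measurable]: "f \<in> borel_measurable lborel" using f by auto
  have ia: "integrable lborel (\<lambda>s. \<bar>f s\<bar>)" using f by auto
  have it: "integrable lborel (\<lambda>s. \<bar>f s\<bar> * indicator {c..<c+r} (s + lam i))" for i
    by (rule Bochner_Integration.integrable_bound[OF ia]) (auto simp: indicator_def)
  have "(\<integral>t. \<bar>f (t - lam i)\<bar> * indicator {c..<c+r} t \<partial>lborel)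
      = (\<integral>s. \<bar>f s\<bar> * indicator {c..<c+r} (s + lam i) \<partial>lborel)" for i
    using integral_translate_lborel[of "\<lambda>s. \<bar>f s\<bar> * indicator {c..<c+r} (s + lam i)" "lam i"] by simp
  then have "(\<Sum>i<n. \<integral>t. \<bar>f (t - lam i)\<bar> * indicator {c..<c+r} t \<partial>lborel)
      = (\<integral>s. (\<Sum>i<n. \<bar>f s\<bar> * indicator {c..<c+r} (s + lam i)) \<partial>lborel)"
    using it by (subst Bochner_Integration.integral_sum) auto
  also have "\<dots> = (\<integral>s. \<bar>f s\<bar> * (\<Sum>i<n. indicator {c..<c+r} (s + lam i)) \<partial>lborel)"
    by (simp add: sum_distrib_left)
  also have "\<dots> \<le> (\<integral>s. \<bar>f s\<bar> * (r / \<delta> + 1) \<partial>lborel)"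
  proof (rule integral_mono)
    show "integrable lborel (\<lambda>s. \<bar>f s\<bar> * (\<Sum>i<n. indicator {c..<c+r} (s + lam i)))"
      unfolding sum_distrib_left using it by (intro Bochner_Integration.integrable_sum) auto
    show "integrable lborel (\<lambda>s. \<bar>f s\<bar> * (r / \<delta> + 1))" using ia by auto
    show "\<bar>f s\<bar> * (\<Sum>i<n. indicator {c..<c+r} (s + lam i)) \<le> \<bar>f s\<bar> * (r / \<delta> + 1)" for s
      using sum_indicator_translates_le[OF \<delta> sep r] by (intro mult_left_mono) auto
  qed
  also have "\<dots> = (\<integral>t. \<bar>f t\<bar> \<partial>lborel) * (r / \<delta> + 1)" by simp
  finally show ?thesis .
qed

lemma integral_abs_translate_indicator_le:
  fixes f :: "real \<Rightarrow> real"
  assumes f: "integrable lborel f" and S: "S \<in> sets lborel"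
  shows "(\<integral>t. \<bar>f (t - a)\<bar> * indicator S t \<partial>lborel) \<le> (\<integral>t. \<bar>f t\<bar> \<partial>lborel)"
proof -
  have "integrable lborel (\<lambda>t. \<bar>f (t - a)\<bar>)"
    using f integrable_translate_lborel_iff[of "\<lambda>t. \<bar>f t\<bar>" a] by simp
  then have "(\<integral>t. \<bar>f (t - a)\<bar> * indicator S t \<partial>lborel) \<le> (\<integral>t. \<bar>f (t - a)\<bar> \<partial>lborel)"
    using S by (intro integral_mono integrable_real_mult_indicator) (auto simp: indicator_def)
  also have "\<dots> = (\<integral>t. \<bar>f t\<bar> \<partial>lborel)" by (rule integral_translate_lborel)
  finally show ?thesis .
qed

definition subinterval :: "real \<Rightarrow> nat \<Rightarrow> nat \<Rightarrow> real set" where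
  "subinterval c m k = {c + real k / m..<c + real (Suc k) / m}"

lemma subinterval_eq: "subinterval c m k = {c + real k / m..<c + real k / m + 1 / m}"
  unfolding subinterval_def by (simp add: add_divide_distrib add_ac)

lemma subinterval_subset:
  assumes "k < m" shows "subinterval c m k \<subseteq> {c..<c+1}"
proof -
  have "real k / m \<ge> 0" "real (Suc k) / m \<le> 1" using assms by auto
  then show ?thesis unfolding subinterval_def by auto
qed

lemma subinterval_finite_measure:
  "subinterval c m k \<in> sets lborel" "emeasure lborel (subinterval c m k) < \<infinity>"
proof -
  have "real k / m \<le> real (Suc k) / m" by (simp add: divide_right_mono)
  then show "subinterval c m k \<in> sets lborel" "emeasure lborel (subinterval c m k) < \<infinity>"
    unfolding subinterval_def by simp_all
qed

lemma emeasure_subinterval: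
  assumes "0 < m" shows "emeasure lborel (subinterval c m k) = ennreal (1 / m)"
  using assms unfolding subinterval_eq by simp

lemma sum_indicator_subinterval:
  assumes m: "0 < m"
  shows "(\<Sum>k<m. indicator (subinterval c m k) x :: real) = indicator {c..<c+1} x"
proof (cases "x \<in> {c..<c+1}")
  case True
  define k where "k = nat \<lfloor>(x - c) * m\<rfloor>"
  have x0: "0 \<le> (x - c) * m" using True by simp
  have fl: "real_of_int \<lfloor>(x - c) * m\<rfloor> = real k" using x0 k_def by simp
  have "(x - c) * m < m" using True m by simp
  then have "real_of_int \<lfloor>(x - c) * m\<rfloor> < real m"
    by (meson le_less_trans of_int_floor_le)
  then have km: "k < m" using fl by simp
  have "real k \<le> (x - c) * m" using fl by (metis of_int_floor_le)
  moreover have "(x - c) * m < real k + 1" using fl by (metis real_of_int_floor_add_one_gt)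
  ultimately have xk: "x \<in> subinterval c m k"
    using m unfolding subinterval_def by (simp add: field_simps)
  have unique: "k' = k" if "k' < m" "x \<in> subinterval c m k'" for k'
  proof (rule ccontr)
    assume "k' \<noteq> k"
    then consider "Suc k \<le> k'" | "Suc k' \<le> k" by linarith
    then show False
    proof cases
      case 1
      then have "real (Suc k) / m \<le> real k' / m" using m by (simp add: divide_right_mono)
      then show False using xk that(2) by (auto simp: subinterval_def)
    next
      case 2
      then have "real (Suc k') / m \<le> real k / m" using m by (simp add: divide_right_mono)
      then show False using xk that(2) by (auto simp: subinterval_def)
    qed
  qed
  have "(\<Sum>k'<m. indicator (subinterval c m k') x :: real) = (\<Sum>k'\<in>{k}. indicator (subinterval c m k') x)"
    using km unique by (intro sum.mono_neutral_right) (auto simp: indicator_def)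
  then show ?thesis using xk True by simp
next
  case False
  then have "x \<notin> subinterval c m k" if "k < m" for k
    using subinterval_subset[OF that] by blast
  then show ?thesis using False by (simp add: indicator_def)
qed

lemma sum_integral_subinterval:
  fixes G :: "real \<Rightarrow> real"
  assumes m: "0 < m" and G: "\<And>S. S \<in> sets lborel \<Longrightarrow> emeasure lborel S < \<infinity> \<Longrightarrow>
      integrable lborel (\<lambda>t. G t * indicator S t)"
  shows "(\<Sum>k<m. \<integral>t. G t * indicator (subinterval c m k) t \<partial>lborel)
    = (\<integral>t. G t * indicator {c..<c+1} t \<partial>lborel)"
proof -
  have "(\<Sum>k<m. \<integral>t. G t * indicator (subinterval c m k) t \<partial>lborel)
      = (\<integral>t. (\<Sum>k<m. G t * indicator (subinterval c m k) t) \<partial>lborel)"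
    using G[OF subinterval_finite_measure] by (subst Bochner_Integration.integral_sum) auto
  also have "\<dots> = (\<integral>t. G t * indicator {c..<c+1} t \<partial>lborel)"
    by (simp only: sum_distrib_left[symmetric] sum_indicator_subinterval[OF m])
  finally show ?thesis .
qed

section \<open>Fundamental bounded minimal systems of translates\<close>

lemma measure_eq_integral_expansion:
  fixes x :: "nat \<Rightarrow> real \<Rightarrow> real" and n :: nat
  assumes p: "1 \<le> p" and x: "\<And>i. i < n \<Longrightarrow> in_Lp p (x i)"
    and W: "W \<in> sets lborel" "emeasure lborel W < \<infinity>"
  shows "measure lborel W = (\<Sum>i<n. c i * (\<integral>t. indicator W t * x i t \<partial>lborel))
    + (\<integral>t. indicator W t * (indicator W t - (\<Sum>i<n. c i * x i t)) \<partial>lborel)"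
proof -
  have ix: "integrable lborel (\<lambda>t. indicator W t * x i t)" if "i < n" for i
    by (rule in_Lp_integrable_on(2)[OF p x[OF that] W])
  have "(\<integral>t. indicator W t * (indicator W t - (\<Sum>i<n. c i * x i t)) \<partial>lborel)
      = (\<integral>t. indicator W t - (\<Sum>i<n. c i * (indicator W t * x i t)) \<partial>lborel)"
    by (intro Bochner_Integration.integral_cong) (auto simp: indicator_def sum_distrib_left)
  also have "\<dots> = (\<integral>t. indicator W t \<partial>lborel)
      - (\<integral>t. (\<Sum>i<n. c i * (indicator W t * x i t)) \<partial>lborel)"
    using W ix by (intro Bochner_Integration.integral_diff Bochner_Integration.integrable_sum
        Bochner_Integration.integrable_mult_right) auto
  also have "(\<integral>t. (\<Sum>i<n. c i * (indicator W t * x i t)) \<partial>lborel)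
      = (\<Sum>i<n. c i * (\<integral>t. indicator W t * x i t \<partial>lborel))"
    using ix by (subst Bochner_Integration.integral_sum) auto
  finally show ?thesis using W by simp
qed

lemma bounded_minimal_Lp_uniform_bound:
  assumes fLp: "in_Lp p f"
    and bm: "bounded_minimal_Lp p (\<lambda>i. translate f (lam i))"
  obtains xs K where "\<And>i. Lp_dual p (xs i)"
    "\<And>i j. xs i (translate f (lam j)) = (if i = j then 1 else 0)"
    "0 \<le> K" "\<And>i h. in_Lp p h \<Longrightarrow> \<bar>xs i h\<bar> \<le> K * lp_norm p h"
proof -
  obtain xs M where xs: "\<And>i. Lp_dual p (xs i)"
    "\<And>i j. xs i (translate f (lam j)) = (if i = j then 1 else 0)"
    and M: "\<And>i. lp_norm p (translate f (lam i)) * dual_norm p (xs i) \<le> M"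
    using bm unfolding bounded_minimal_Lp_def by blast
  define L where "L = lp_norm p f"
  have L0: "0 \<le> L" unfolding L_def by (rule lp_norm_nonneg)
  have "\<bar>xs 0 (translate f (lam 0))\<bar> \<le> dual_norm p (xs 0) * lp_norm p (translate f (lam 0))"
    by (rule abs_le_dual_norm(1)[OF xs(1) in_Lp_translate[OF fLp]])
  then have Lpos: "0 < L"
    using xs(2)[of 0 0] L0 unfolding lp_norm_translate L_def by (cases "lp_norm p f = 0") auto
  have M0: "0 \<le> M"
    using M[of 0] L0 abs_le_dual_norm(2)[OF xs(1) in_Lp_translate[OF fLp]]
    by (smt (verit) L_def lp_norm_translate mult_nonneg_nonneg)
  show ?thesis
  proof (rule that[OF xs(1) xs(2), of "M / L"])
    show "0 \<le> M / L" using M0 L0 by simp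
    fix i h assume h: "in_Lp p h"
    have dn: "dual_norm p (xs i) \<le> M / L" using M[of i] Lpos
      by (simp add: lp_norm_translate L_def[symmetric] pos_le_divide_eq mult.commute)
    have "\<bar>xs i h\<bar> \<le> dual_norm p (xs i) * lp_norm p h" by (rule abs_le_dual_norm(1)[OF xs(1) h])
    also have "\<dots> \<le> M / L * lp_norm p h" using dn by (intro mult_right_mono lp_norm_nonneg)
    finally show "\<bar>xs i h\<bar> \<le> M / L * lp_norm p h" .
  qed
qed

locale bounded_biorthogonal_system =
  fixes p :: real and x :: "nat \<Rightarrow> real \<Rightarrow> real"
    and xs :: "nat \<Rightarrow> (real \<Rightarrow> real) \<Rightarrow> real" and K :: real
  assumes p: "1 \<le> p"
    and in_Lp_x: "\<And>i. in_Lp p (x i)"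
    and fundamental: "fundamental_Lp p x"
    and Lp_dual_xs: "\<And>i. Lp_dual p (xs i)"
    and biorthogonal: "\<And>i j. xs i (x j) = (if i = j then 1 else 0)"
    and K: "0 \<le> K" "\<And>i h. in_Lp p h \<Longrightarrow> \<bar>xs i h\<bar> \<le> K * lp_norm p h"
begin

lemma coefficient_eq:
  assumes "j < n"
  shows "xs j (\<lambda>t. \<Sum>i<n. c i * x i t) = c j"
proof -
  have "xs j (\<lambda>t. \<Sum>i<n. c i * x i t) = (\<Sum>i<n. c i * xs j (x i))"
    using p in_Lp_x by (intro Lp_dual_sum[OF Lp_dual_xs]) auto
  also have "\<dots> = c j"
    using assms by (simp add: biorthogonal if_distrib[of "(*) _"] sum.delta cong: if_cong)
  finally show ?thesis .
qed

lemma measure_le_coefficient_mass: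
  assumes W: "W \<in> sets lborel" "emeasure lborel W < \<infinity>" and e: "0 < e" and \<eta>: "0 < \<eta>"
  shows "\<exists>n. measure lborel W \<le> e * measure lborel W + e powr (1 - p) * \<eta> powr p
    + K * (measure lborel W powr (1 / p) + \<eta>) * (\<Sum>j<n. \<integral>t. \<bar>x j t\<bar> * indicator W t \<partial>lborel)"
proof -
  have p0: "0 < p" using p by simp
  note indLp = in_Lp_indicator[OF p0 W]
  obtain n c where nc: "lp_norm p (\<lambda>t. indicator W t - (\<Sum>i<n. c i * x i t)) < \<eta>"
    using fundamental indLp(1) \<eta> unfolding fundamental_Lp_def by blast
  define s where "s = (\<lambda>t. \<Sum>i<n. c i * x i t)"
  define u where "u = (\<lambda>t. indicator W t - s t)"
  have sLp: "in_Lp p s" unfolding s_def using in_Lp_x by (intro in_Lp_sum[OF p0])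
  have uLp: "in_Lp p u" unfolding u_def by (rule in_Lp_diff[OF p0 indLp(1) sLp])
  have lpu: "lp_norm p u < \<eta>" using nc unfolding u_def s_def .
  have c_bound: "\<bar>c j\<bar> \<le> K * (measure lborel W powr (1 / p) + \<eta>)" if "j < n" for j
  proof -
    have "xs j (\<lambda>t. 1 * indicator W t + (-1) * u t) = 1 * xs j (indicator W) + (-1) * xs j u"
      using Lp_dual_xs[of j] indLp(1) uLp unfolding Lp_dual_def by blast
    moreover have "(\<lambda>t. 1 * indicator W t + (-1) * u t) = s" unfolding u_def by auto
    ultimately have "c j = xs j (indicator W) - xs j u"
      using coefficient_eq[OF that, of c] unfolding s_def by simp
    then have "\<bar>c j\<bar> \<le> K * lp_norm p (indicator W) + K * lp_norm p u"
      using K(2)[OF indLp(1), of j] K(2)[OF uLp, of j] by linarith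
    also have "\<dots> \<le> K * (measure lborel W powr (1 / p) + \<eta>)"
      using indLp(2) lpu K(1) by (simp add: distrib_left mult_left_mono)
    finally show ?thesis .
  qed
  have "\<bar>\<Sum>j<n. c j * (\<integral>t. indicator W t * x j t \<partial>lborel)\<bar>
      \<le> (\<Sum>j<n. \<bar>c j\<bar> * (\<integral>t. \<bar>x j t\<bar> * indicator W t \<partial>lborel))"
    by (rule order_trans[OF sum_abs sum_mono])
      (auto simp: abs_mult intro!: mult_left_mono abs_integral_indicator_le_integral_abs)
  also have "\<dots> \<le> K * (measure lborel W powr (1 / p) + \<eta>) * (\<Sum>j<n. \<integral>t. \<bar>x j t\<bar> * indicator W t \<partial>lborel)"
    unfolding sum_distrib_left using c_bound
    by (intro sum_mono mult_right_mono) (auto intro!: integral_nonneg_AE)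
  finally have mass: "\<bar>\<Sum>j<n. c j * (\<integral>t. indicator W t * x j t \<partial>lborel)\<bar> \<le> \<dots>" .
  have "(\<integral>t. \<bar>u t\<bar> powr p \<partial>lborel) < \<eta> powr p"
    using lpu lp_norm_nonneg[of p u] p0 by (simp add: lp_norm_powr[symmetric] powr_less_mono2)
  then have "\<bar>\<integral>t. indicator W t * u t \<partial>lborel\<bar> \<le> e * measure lborel W + e powr (1 - p) * \<eta> powr p"
    using abs_integral_indicator_le[OF p e uLp W] e
    by (smt (verit) mult_left_mono powr_ge_zero)
  moreover have "measure lborel W = (\<Sum>j<n. c j * (\<integral>t. indicator W t * x j t \<partial>lborel))
      + (\<integral>t. indicator W t * u t \<partial>lborel)"
    unfolding u_def s_def by (rule measure_eq_integral_expansion[OF p in_Lp_x W])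
  ultimately show ?thesis using mass by (intro exI[of _ n]) linarith
qed

lemma measure_le_mass:
  assumes W: "W \<in> sets lborel" "emeasure lborel W < \<infinity>" and W0: "0 < measure lborel W"
  shows "\<exists>n. measure lborel W
    \<le> 4 * K * measure lborel W powr (1 / p) * (\<Sum>j<n. \<integral>t. \<bar>x j t\<bar> * indicator W t \<partial>lborel)"
proof -
  define r where "r = measure lborel W"
  define \<eta> where "\<eta> = r powr (1 / p) / 4"
  have p0: "0 < p" using p by simp
  have "\<eta> powr p = r / 4 powr p"
    unfolding \<eta>_def using p0 W0 by (simp add: r_def powr_divide powr_powr)
  moreover have "(1 / 4) powr (1 - p) = 4 powr p / (4::real)"
    by (simp add: powr_divide powr_diff)
  ultimately have small: "(1 / 4) powr (1 - p) * \<eta> powr p = r / 4"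
    by (simp add: field_simps)
  have "(0::real) < 1 / 4" "0 < \<eta>" using W0 unfolding \<eta>_def r_def by simp_all
  then obtain n where n: "r \<le> 1 / 4 * r + (1 / 4) powr (1 - p) * \<eta> powr p
      + K * (r powr (1 / p) + \<eta>) * (\<Sum>j<n. \<integral>t. \<bar>x j t\<bar> * indicator W t \<partial>lborel)"
    using measure_le_coefficient_mass[OF W] unfolding r_def[symmetric] by blast
  define S where "S = K * (\<Sum>j<n. \<integral>t. \<bar>x j t\<bar> * indicator W t \<partial>lborel)"
  have "0 \<le> S"
    unfolding S_def using K(1) by (intro mult_nonneg_nonneg sum_nonneg integral_nonneg_AE) auto
  moreover have "\<eta> \<le> r powr (1 / p)" unfolding \<eta>_def by simp
  ultimately have "(r powr (1 / p) + \<eta>) * S \<le> (2 * r powr (1 / p)) * S"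
    by (intro mult_right_mono) auto
  then have "K * (r powr (1 / p) + \<eta>) * (\<Sum>j<n. \<integral>t. \<bar>x j t\<bar> * indicator W t \<partial>lborel)
      \<le> 2 * K * r powr (1 / p) * (\<Sum>j<n. \<integral>t. \<bar>x j t\<bar> * indicator W t \<partial>lborel)"
    unfolding S_def by (simp add: ac_simps)
  then show ?thesis using n small unfolding r_def by (intro exI[of _ n]) linarith
qed

lemma unit_interval_mass_unbounded:
  assumes m: "0 < m"
  shows "\<exists>N. real m powr (1 / p) \<le> 4 * K * (\<Sum>j<N. \<integral>t. \<bar>x j t\<bar> * indicator {c..<c+1} t \<partial>lborel)"
proof -
  define T where "T n k = (\<Sum>j<n. \<integral>t. \<bar>x j t\<bar> * indicator (subinterval c m k) t \<partial>lborel)" for n k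
  have "measure lborel (subinterval c m k) = 1 / m" for k
    using emeasure_subinterval[OF m] by (simp add: measure_def)
  then have "\<exists>n. 1 / m \<le> 4 * K * (1 / m) powr (1 / p) * T n k" for k
    using measure_le_mass[OF subinterval_finite_measure(1,2)[of c m k]] m unfolding T_def by simp
  then obtain n where n: "\<And>k. 1 / m \<le> 4 * K * (1 / m) powr (1 / p) * T (n k) k" by metis
  define N where "N = (\<Sum>k<m. n k)"
  have "T (n k) k \<le> T N k" if "k < m" for k
    unfolding T_def N_def using that
    by (intro sum_mono2) (auto intro!: integral_nonneg_AE member_le_sum)
  moreover have "0 \<le> 4 * K * (1 / m) powr (1 / p)" using K(1) by simp
  ultimately have "1 / m \<le> 4 * K * (1 / m) powr (1 / p) * T N k" if "k < m" for k
    using n[of k] that by (meson mult_left_mono order_trans)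
  then have "(\<Sum>k<m. 1 / real m) \<le> (\<Sum>k<m. 4 * K * (1 / m) powr (1 / p) * T N k)"
    by (intro sum_mono) auto
  also have "\<dots> = 4 * K * (1 / m) powr (1 / p) * (\<Sum>j<N. \<Sum>k<m. \<integral>t. \<bar>x j t\<bar> * indicator (subinterval c m k) t \<partial>lborel)"
    unfolding T_def by (simp add: sum_distrib_left sum.swap[of _ "{..<m}"])
  also have "(\<Sum>j<N. \<Sum>k<m. \<integral>t. \<bar>x j t\<bar> * indicator (subinterval c m k) t \<partial>lborel)
      = (\<Sum>j<N. \<integral>t. \<bar>x j t\<bar> * indicator {c..<c+1} t \<partial>lborel)"
    using in_Lp_integrable_on(1)[OF p in_Lp_x] by (intro sum.cong sum_integral_subinterval[OF m]) auto
  finally have "1 \<le> 4 * K * (1 / m) powr (1 / p) * (\<Sum>j<N. \<integral>t. \<bar>x j t\<bar> * indicator {c..<c+1} t \<partial>lborel)"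
    using m by simp
  then have "real m powr (1 / p) * 1 \<le> real m powr (1 / p) * (4 * K * (1 / m) powr (1 / p)
      * (\<Sum>j<N. \<integral>t. \<bar>x j t\<bar> * indicator {c..<c+1} t \<partial>lborel))"
    by (intro mult_left_mono) auto
  also have "\<dots> = 4 * K * (\<Sum>j<N. \<integral>t. \<bar>x j t\<bar> * indicator {c..<c+1} t \<partial>lborel)"
    using m by (simp add: powr_divide)
  finally show ?thesis by auto
qed

end

lemma translates_not_fundamental_bounded_minimal:
  assumes p: "1 \<le> p" and f: "in_Lp p f" "integrable lborel f" and ud: "uniformly_discrete_seq lam"
  shows "\<not> (fundamental_Lp p (\<lambda>i. translate f (lam i)) \<and> bounded_minimal_Lp p (\<lambda>i. translate f (lam i)))"
proof
  assume "fundamental_Lp p (\<lambda>i. translate f (lam i)) \<and> bounded_minimal_Lp p (\<lambda>i. translate f (lam i))"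
  then have fund: "fundamental_Lp p (\<lambda>i. translate f (lam i))"
    and bm: "bounded_minimal_Lp p (\<lambda>i. translate f (lam i))" by auto
  obtain \<delta> where \<delta>: "0 < \<delta>" and sep: "\<forall>i j. i \<noteq> j \<longrightarrow> \<delta> \<le> \<bar>lam i - lam j\<bar>"
    using ud unfolding uniformly_discrete_seq_def by blast
  obtain xs K where xs: "\<And>i. Lp_dual p (xs i)"
      "\<And>i j. xs i (translate f (lam j)) = (if i = j then 1 else 0)"
    and K: "0 \<le> K" "\<And>i h. in_Lp p h \<Longrightarrow> \<bar>xs i h\<bar> \<le> K * lp_norm p h"
    using bounded_minimal_Lp_uniform_bound[OF f(1) bm] by blast
  interpret bounded_biorthogonal_system p "\<lambda>i. translate f (lam i)" xs K
    using p in_Lp_translate[OF f(1)] fund xs K by unfold_locales auto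
  define A where "A = (\<integral>t. \<bar>f t\<bar> \<partial>lborel) * (1 / \<delta> + 1)"
  have A0: "0 \<le> A" unfolding A_def using \<delta> by (intro mult_nonneg_nonneg integral_nonneg_AE) auto
  obtain m :: nat where m: "(4 * K * A) powr p < real m"
    using reals_Archimedean2 by blast
  then have "0 < m" by (metis of_nat_0_less_iff order_le_less_trans powr_ge_zero)
  then obtain N where N: "real m powr (1 / p)
      \<le> 4 * K * (\<Sum>j<N. \<integral>t. \<bar>translate f (lam j) t\<bar> * indicator {0..<0+1} t \<partial>lborel)"
    using unit_interval_mass_unbounded by blast
  have "(\<Sum>j<N. \<integral>t. \<bar>translate f (lam j) t\<bar> * indicator {0..<0+1} t \<partial>lborel) \<le> A"
    unfolding A_def translate_def
    using sum_integral_translates_le[OF f(2) \<delta> sep, where r=1 and c=0 and n=N] by simp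
  then have "real m powr (1 / p) \<le> 4 * K * A"
    using N K(1) by (smt (verit) mult_left_mono)
  moreover have "4 * K * A = ((4 * K * A) powr p) powr (1 / p)"
    using p K(1) A0 by (simp add: powr_powr)
  moreover have "((4 * K * A) powr p) powr (1 / p) < real m powr (1 / p)"
    using m p by (intro powr_less_mono2) auto
  ultimately show False by linarith
qed

section \<open>Frames of translates\<close>

lemma integral_indicator_tendsto_0:
  fixes u :: "nat \<Rightarrow> real \<Rightarrow> real"
  assumes p: "1 \<le> p" and u: "\<And>n. in_Lp p (u n)"
    and W: "W \<in> sets lborel" "emeasure lborel W < \<infinity>"
    and lim: "(\<lambda>n. \<integral>t. \<bar>u n t\<bar> powr p \<partial>lborel) \<longlonglongrightarrow> 0"
  shows "(\<lambda>n. \<integral>t. indicator W t * u n t \<partial>lborel) \<longlonglongrightarrow> 0"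
  unfolding lim_sequentially
proof (intro allI impI)
  fix \<epsilon> :: real assume \<epsilon>: "0 < \<epsilon>"
  define M where "M = measure lborel W"
  define e where "e = \<epsilon> / (2 * (M + 1))"
  have "0 \<le> M" unfolding M_def by simp
  then have e: "0 < e" "e * measure lborel W < \<epsilon> / 2"
    using \<epsilon> unfolding M_def[symmetric] by (auto simp: e_def field_simps)
  moreover have "0 < \<epsilon> / 2 / e powr (1 - p)" using \<epsilon> e by simp
  ultimately obtain N where N: "\<And>n. n \<ge> N \<Longrightarrow> (\<integral>t. \<bar>u n t\<bar> powr p \<partial>lborel) < \<epsilon> / 2 / e powr (1 - p)"
    using lim unfolding lim_sequentially dist_real_def by force
  show "\<exists>N. \<forall>n\<ge>N. dist (\<integral>t. indicator W t * u n t \<partial>lborel) 0 < \<epsilon>"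
  proof (intro exI allI impI)
    fix n assume "N \<le> n"
    then have "e powr (1 - p) * (\<integral>t. \<bar>u n t\<bar> powr p \<partial>lborel) < \<epsilon> / 2"
      using N e by (simp add: field_simps)
    then show "dist (\<integral>t. indicator W t * u n t \<partial>lborel) 0 < \<epsilon>"
      using abs_integral_indicator_le[OF p e(1) u W, of n] e(2) by (simp add: dist_real_def)
  qed
qed

lemma integral_tail_tendsto_0:
  fixes h :: "real \<Rightarrow> real"
  assumes h: "integrable lborel h"
  shows "(\<lambda>n. \<integral>t. h t * indicator {real n..} t \<partial>lborel) \<longlonglongrightarrow> 0"
proof -
  have "(\<lambda>n. \<integral>t. h t * indicator {real n..} t \<partial>lborel) \<longlonglongrightarrow> (\<integral>t. 0 \<partial>(lborel :: real measure))"
  proof (rule integral_dominated_convergence[where w="\<lambda>t. \<bar>h t\<bar>" and f="\<lambda>t. 0"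
        and M=lborel and s="\<lambda>n t. h t * indicator {real n..} t"])
    show "AE t in lborel. (\<lambda>n. h t * indicator {real n..} t) \<longlonglongrightarrow> 0"
    proof (intro AE_I2)
      fix t :: real
      obtain n0 :: nat where "t < real n0" using reals_Archimedean2 by blast
      then have "eventually (\<lambda>n. h t * indicator {real n..} t = 0) sequentially"
        unfolding eventually_sequentially by (intro exI[of _ n0]) (auto simp: indicator_def)
      then show "(\<lambda>n. h t * indicator {real n..} t) \<longlonglongrightarrow> 0"
        by (rule tendsto_eventually)
    qed
  qed (use h in \<open>auto simp: indicator_def\<close>)
  then show ?thesis by simp
qed

lemma eventually_tail_integral_le:
  fixes u :: "real \<Rightarrow> real"
  assumes q: "1 \<le> q" and u: "in_Lp q u" and \<epsilon>: "0 < \<epsilon>"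
  shows "eventually (\<lambda>n::nat. \<forall>W. W \<in> sets lborel \<longrightarrow> W \<subseteq> {real n..} \<longrightarrow>
    emeasure lborel W \<le> ennreal B \<longrightarrow> (\<integral>t. \<bar>u t\<bar> * indicator W t \<partial>lborel) \<le> \<epsilon>) sequentially"
proof -
  have uq: "integrable lborel (\<lambda>t. \<bar>u t\<bar> powr q)" using u unfolding in_Lp_def by auto
  define T where "T n = (\<integral>t. \<bar>u t\<bar> powr q * indicator {real n..} t \<partial>lborel)" for n :: nat
  have "T \<longlonglongrightarrow> 0" unfolding T_def using uq by (rule integral_tail_tendsto_0)
  define e where "e = \<epsilon> / (2 * (\<bar>B\<bar> + 1))"
  have e: "0 < e" "e * \<bar>B\<bar> \<le> \<epsilon> / 2"
    using \<epsilon> by (auto simp: e_def field_simps)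
  moreover have "0 < \<epsilon> / 2 / e powr (1 - q)" using \<epsilon> e by simp
  ultimately obtain N where N: "\<And>n. n \<ge> N \<Longrightarrow> T n < \<epsilon> / 2 / e powr (1 - q)"
    using \<open>T \<longlonglongrightarrow> 0\<close> unfolding lim_sequentially dist_real_def by force
  show ?thesis unfolding eventually_sequentially
  proof (intro exI[of _ N] allI impI)
    fix n W assume n: "N \<le> n" and W: "W \<in> sets lborel" "W \<subseteq> {real n..}" "emeasure lborel W \<le> ennreal B"
    have Wf: "emeasure lborel W < \<infinity>" using W(3) by (simp add: le_less_trans)
    have "measure lborel W \<le> \<bar>B\<bar>"
    proof (cases "0 \<le> B")
      case True
      then show ?thesis using W(3) Wf by (simp add: measure_def enn2real_leI)
    next
      case False
      then show ?thesis using W(3) by (simp add: measure_def ennreal_neg)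
    qed
    then have "e * measure lborel W \<le> \<epsilon> / 2"
      using e by (smt (verit) mult_left_mono)
    moreover have "e powr (1 - q) * (\<integral>t. \<bar>u t\<bar> powr q * indicator W t \<partial>lborel) < \<epsilon> / 2"
    proof -
      have "(\<integral>t. \<bar>u t\<bar> powr q * indicator W t \<partial>lborel) \<le> T n"
        unfolding T_def using W uq
        by (intro integral_mono integrable_real_mult_indicator) (auto simp: indicator_def)
      then have "e powr (1 - q) * (\<integral>t. \<bar>u t\<bar> powr q * indicator W t \<partial>lborel) \<le> e powr (1 - q) * T n"
        by (intro mult_left_mono) auto
      also have "\<dots> < \<epsilon> / 2" using N[OF n] e by (simp add: field_simps)
      finally show ?thesis .
    qed
    ultimately show "(\<integral>t. \<bar>u t\<bar> * indicator W t \<partial>lborel) \<le> \<epsilon>"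
      using integral_abs_indicator_le[OF q e(1) u W(1) Wf] by linarith
  qed
qed

lemma emeasure_UN_geometric_le:
  assumes I: "\<And>n. I n \<in> sets lborel" "\<And>n. emeasure lborel (I n) = ennreal ((1 / 2) ^ n)"
  shows "emeasure lborel (\<Union>n. I n) \<le> ennreal 2"
proof -
  have "emeasure lborel (\<Union>n. I n) \<le> (\<Sum>n. emeasure lborel (I n))"
    using I(1) by (intro emeasure_subadditive_countably) auto
  also have "\<dots> = ennreal (\<Sum>n. (1 / 2 :: real) ^ n)"
    unfolding I(2) by (intro suminf_ennreal2) (auto intro: summable_geometric)
  finally show ?thesis using suminf_geometric[of "1 / 2 :: real"] by simp
qed

lemma UN_later_subset:
  fixes R :: "nat \<Rightarrow> real"
  assumes I: "\<And>n. I n \<subseteq> {R n..<R (Suc n)}" and R: "\<And>n. R n \<le> R (Suc n)"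
  shows "(\<Union>l\<in>{Suc n..}. I l) \<subseteq> {R (Suc n)..}"
proof
  fix t assume "t \<in> (\<Union>l\<in>{Suc n..}. I l)"
  then obtain l where l: "Suc n \<le> l" "t \<in> I l" by auto
  have "R (Suc n) \<le> R l" using lift_Suc_mono_le[of R, OF R l(1)] .
  then show "t \<in> {R (Suc n)..}" using l(2) I[of l] by auto
qed

lemma indicator_UN_split:
  fixes R :: "nat \<Rightarrow> real"
  assumes I: "\<And>n. I n \<subseteq> {R n..<R (Suc n)}" and R: "\<And>n. R n \<le> R (Suc n)"
  shows "indicator (\<Union>n. I n) t
    = indicator (\<Union>l<n. I l) t + indicator (I n) t + (indicator (\<Union>l\<in>{Suc n..}. I l) t :: real)"
proof -
  have disjoint: "A \<inter> B = {}" if "A \<subseteq> {..<r}" "B \<subseteq> {r..}" for A B :: "real set" and r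
    using that by (auto simp: subset_eq) (meson linorder_not_le)
  have "(\<Union>n. I n) \<subseteq> (\<Union>l<n. I l) \<union> I n \<union> (\<Union>l\<in>{Suc n..}. I l)"
  proof
    fix t assume "t \<in> (\<Union>n. I n)"
    then obtain l where l: "t \<in> I l" by auto
    consider "l < n" | "l = n" | "Suc n \<le> l" by linarith
    then show "t \<in> (\<Union>l<n. I l) \<union> I n \<union> (\<Union>l\<in>{Suc n..}. I l)"
      by cases (use l in auto)
  qed
  then have union: "(\<Union>n. I n) = (\<Union>l<n. I l) \<union> I n \<union> (\<Union>l\<in>{Suc n..}. I l)" by auto
  have before: "(\<Union>l<n. I l) \<subseteq> {..<R n}"
  proof
    fix t assume "t \<in> (\<Union>l<n. I l)"
    then obtain l where l: "l < n" "t \<in> I l" by auto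
    have "R (Suc l) \<le> R n" using lift_Suc_mono_le[of R, OF R] l(1) by simp
    then show "t \<in> {..<R n}" using l(2) I[of l] by auto
  qed
  have later: "(\<Union>l\<in>{Suc n..}. I l) \<subseteq> {R (Suc n)..}"
    by (rule UN_later_subset[where I=I and R=R, OF I R])
  have "I n \<subseteq> {R n..}" "I n \<subseteq> {..<R (Suc n)}" "(\<Union>l\<in>{Suc n..}. I l) \<subseteq> {R n..}"
    using I[of n] later R[of n] by auto
  then have "(\<Union>l<n. I l) \<inter> I n = {}" "(\<Union>l<n. I l) \<inter> (\<Union>l\<in>{Suc n..}. I l) = {}"
    "I n \<inter> (\<Union>l\<in>{Suc n..}. I l) = {}"
    using disjoint[OF before] disjoint[OF _ later] by simp_all
  with union show ?thesis unfolding indicator_def by auto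
qed

locale translate_frame =
  fixes p q :: real and f :: "real \<Rightarrow> real" and lam :: "nat \<Rightarrow> real"
    and g :: "nat \<Rightarrow> real \<Rightarrow> real"
  assumes p: "1 \<le> p" and q: "1 \<le> q"
    and in_Lp_f: "in_Lp p f" and in_Lq_g: "\<And>i. in_Lp q (g i)"
    and frame: "Lp_frame p (\<lambda>i. translate f (lam i)) g"
begin

abbreviation coeff :: "nat \<Rightarrow> (real \<Rightarrow> real) \<Rightarrow> real" where
  "coeff i h \<equiv> \<integral>s. h s * g i s \<partial>lborel"

abbreviation remainder :: "(real \<Rightarrow> real) \<Rightarrow> nat \<Rightarrow> real \<Rightarrow> real" where
  "remainder h n \<equiv> \<lambda>t. h t - (\<Sum>i<n. coeff i h * translate f (lam i) t)"

lemma in_Lp_remainder: "in_Lp p h \<Longrightarrow> in_Lp p (remainder h n)"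
  using p in_Lp_translate[OF in_Lp_f] by (intro in_Lp_diff in_Lp_sum) auto

lemma integral_remainder_tendsto_0:
  assumes "in_Lp p h"
  shows "(\<lambda>n. \<integral>t. \<bar>remainder h n t\<bar> powr p \<partial>lborel) \<longlonglongrightarrow> 0"
proof -
  have "(\<lambda>n. lp_norm p (remainder h n)) \<longlonglongrightarrow> 0"
    using frame assms unfolding Lp_frame_def by blast
  then have "(\<lambda>n. lp_norm p (remainder h n) powr p) \<longlonglongrightarrow> 0"
    using p by (intro tendsto_zero_powrI[OF _ tendsto_const]) (auto simp: lp_norm_nonneg)
  then show ?thesis using p by (simp add: lp_norm_powr)
qed

lemma coeff_integral_sum_tendsto:
  assumes W: "W \<in> sets lborel" "emeasure lborel W < \<infinity>"
  shows "(\<lambda>n. \<Sum>i<n. coeff i (indicator W) * (\<integral>t. indicator W t * translate f (lam i) t \<partial>lborel))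
    \<longlonglongrightarrow> measure lborel W"
proof -
  have indLp: "in_Lp p (indicator W :: real \<Rightarrow> real)"
    using p W by (intro in_Lp_indicator) auto
  have "(\<lambda>n. \<integral>t. indicator W t * remainder (indicator W) n t \<partial>lborel) \<longlonglongrightarrow> 0"
    using integral_indicator_tendsto_0[OF p in_Lp_remainder[OF indLp] W
        integral_remainder_tendsto_0[OF indLp]] .
  then have "(\<lambda>n. measure lborel W - (\<integral>t. indicator W t * remainder (indicator W) n t \<partial>lborel))
      \<longlonglongrightarrow> measure lborel W - 0"
    by (intro tendsto_diff tendsto_const)
  moreover have "measure lborel W - (\<integral>t. indicator W t * remainder (indicator W) n t \<partial>lborel)
      = (\<Sum>i<n. coeff i (indicator W) * (\<integral>t. indicator W t * translate f (lam i) t \<partial>lborel))" for n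
    using measure_eq_integral_expansion[where x="\<lambda>i. translate f (lam i)"
        and c="\<lambda>i. coeff i (indicator W)" and n=n, OF p in_Lp_translate[OF in_Lp_f] W]
    by simp
  ultimately show ?thesis by simp
qed

lemma integral_powr_f_pos: "0 < (\<integral>t. \<bar>f t\<bar> powr p \<partial>lborel)"
proof (rule ccontr)
  assume "\<not> ?thesis"
  moreover have "0 \<le> (\<integral>t. \<bar>f t\<bar> powr p \<partial>lborel)" by (intro integral_nonneg_AE) auto
  ultimately have zero: "(\<integral>t. \<bar>translate f (lam i) t\<bar> powr p \<partial>lborel) = 0" for i
    by (simp add: integral_powr_translate)
  define I :: "real set" where "I = {0..<1}"
  have I: "I \<in> sets lborel" "emeasure lborel I < \<infinity>" unfolding I_def by auto
  have "\<bar>\<integral>t. indicator I t * translate f (lam i) t \<partial>lborel\<bar> \<le> 0 + e" if "0 < e" for i e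
    using abs_integral_indicator_le[OF p that in_Lp_translate[OF in_Lp_f, of "lam i"] I] zero[of i]
    by (simp add: I_def)
  then have "\<bar>\<integral>t. indicator I t * translate f (lam i) t \<partial>lborel\<bar> \<le> 0" for i
    by (rule field_le_epsilon)
  then have "(\<integral>t. indicator I t * translate f (lam i) t \<partial>lborel) = 0" for i
    by simp
  then have "(\<lambda>n. 0::real) \<longlonglongrightarrow> measure lborel I"
    using coeff_integral_sum_tendsto[OF I] by simp
  then show False by (simp add: I_def LIMSEQ_const_iff)
qed

lemma coeff_tendsto_0:
  assumes h: "in_Lp p h"
  shows "(\<lambda>i. coeff i h) \<longlonglongrightarrow> 0"
proof -
  have p0: "0 < p" using p by simp
  define a where "a i = coeff i h" for i
  define u where "u = remainder h"
  define D where "D n = (\<integral>t. \<bar>u n t\<bar> powr p \<partial>lborel)" for n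
  define Fp where "Fp = (\<integral>t. \<bar>f t\<bar> powr p \<partial>lborel)"
  have Fp: "0 < Fp" unfolding Fp_def by (rule integral_powr_f_pos)
  have uL: "in_Lp p (u n)" for n unfolding u_def by (rule in_Lp_remainder[OF h])
  have D0: "D \<longlonglongrightarrow> 0" unfolding D_def u_def by (rule integral_remainder_tendsto_0[OF h])
  have bd: "\<bar>a n\<bar> powr p \<le> 2 powr p * (D n + D (Suc n)) / Fp" for n
  proof -
    have pt: "a n * translate f (lam n) t = u n t + (- u (Suc n) t)" for t
      unfolding u_def a_def by simp
    have ptw: "\<bar>a n * translate f (lam n) t\<bar> powr p = \<bar>a n\<bar> powr p * \<bar>translate f (lam n) t\<bar> powr p" for t
      by (simp only: abs_mult powr_mult abs_ge_zero)
    have xi: "integrable lborel (\<lambda>t. \<bar>translate f (lam n) t\<bar> powr p)"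
      using in_Lp_translate[OF in_Lp_f] unfolding in_Lp_def by simp
    have "\<bar>a n\<bar> powr p * Fp = (\<integral>t. \<bar>a n * translate f (lam n) t\<bar> powr p \<partial>lborel)"
      unfolding ptw Fp_def integral_mult_right_zero integral_powr_translate ..
    also have "\<dots> \<le> (\<integral>t. 2 powr p * (\<bar>u n t\<bar> powr p + \<bar>u (Suc n) t\<bar> powr p) \<partial>lborel)"
    proof (rule integral_mono)
      show "integrable lborel (\<lambda>t. \<bar>a n * translate f (lam n) t\<bar> powr p)"
        unfolding ptw using xi by (rule integrable_mult_right)
      show "integrable lborel (\<lambda>t. 2 powr p * (\<bar>u n t\<bar> powr p + \<bar>u (Suc n) t\<bar> powr p))"
        using uL[of n] uL[of "Suc n"] unfolding in_Lp_def
        by (intro integrable_mult_right Bochner_Integration.integrable_add) auto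
      show "\<bar>a n * translate f (lam n) t\<bar> powr p \<le> 2 powr p * (\<bar>u n t\<bar> powr p + \<bar>u (Suc n) t\<bar> powr p)" for t
        unfolding pt using powr_abs_add_le[OF p0, of "u n t" "- u (Suc n) t"] by (simp only: abs_minus_cancel)
    qed
    also have "\<dots> = 2 powr p * (D n + D (Suc n))"
      unfolding D_def using uL[of n] uL[of "Suc n"] unfolding in_Lp_def
      by (simp only: integral_mult_right_zero Bochner_Integration.integral_add)
    finally show ?thesis using Fp by (simp add: pos_le_divide_eq)
  qed
  have "(\<lambda>n. 2 powr p * (D n + D (Suc n)) / Fp) \<longlonglongrightarrow> 0"
    using tendsto_divide_zero[OF tendsto_mult_right_zero[OF tendsto_add_zero[OF D0 LIMSEQ_Suc[OF D0]]]] .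
  then have "(\<lambda>n. \<bar>a n\<bar> powr p) \<longlonglongrightarrow> 0"
  proof (rule tendsto_sandwich[OF _ _ tendsto_const, rotated 2])
    show "\<forall>\<^sub>F n in sequentially. \<bar>a n\<bar> powr p \<le> 2 powr p * (D n + D (Suc n)) / Fp"
      using bd by simp
  qed simp
  then have "(\<lambda>n. (\<bar>a n\<bar> powr p) powr (1 / p)) \<longlonglongrightarrow> 0"
    by (rule tendsto_zero_powrI[OF _ tendsto_const]) (auto simp: p0)
  then have "(\<lambda>n. \<bar>a n\<bar>) \<longlonglongrightarrow> 0" using p0 by (simp add: powr_powr)
  then show ?thesis unfolding a_def by (simp add: tendsto_rabs_zero_iff)
qed


lemma integrable_abs_g_on:
  "S \<in> sets lborel \<Longrightarrow> emeasure lborel S < \<infinity> \<Longrightarrow> integrable lborel (\<lambda>t. \<bar>g i t\<bar> * indicator S t)"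
  by (rule in_Lp_integrable_on(1)[OF q in_Lq_g])

lemma abs_coeff_indicator_le:
  "\<bar>coeff i (indicator S)\<bar> \<le> (\<integral>t. \<bar>g i t\<bar> * indicator S t \<partial>lborel)"
  using abs_integral_indicator_le_integral_abs[of S "g i"] by (simp add: mult.commute)

lemma coeff_mul_integral_le:
  "coeff i (indicator S) * (\<integral>t. indicator S t * translate f (lam i) t \<partial>lborel)
    \<le> \<bar>coeff i (indicator S)\<bar> * (\<integral>t. \<bar>f (t - lam i)\<bar> * indicator S t \<partial>lborel)"
proof -
  have "coeff i (indicator S) * (\<integral>t. indicator S t * translate f (lam i) t \<partial>lborel)
      \<le> \<bar>coeff i (indicator S)\<bar> * \<bar>\<integral>t. indicator S t * translate f (lam i) t \<partial>lborel\<bar>"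
    by (simp add: abs_mult[symmetric])
  also have "\<dots> \<le> \<bar>coeff i (indicator S)\<bar> * (\<integral>t. \<bar>f (t - lam i)\<bar> * indicator S t \<partial>lborel)"
    using abs_integral_indicator_le_integral_abs[of S "translate f (lam i)"]
    unfolding translate_def by (intro mult_left_mono) auto
  finally show ?thesis .
qed

text \<open>In the sums of \<open>coeff_integral_sum_tendsto\<close> over the \<open>m\<close> pieces of \<open>[R, R + 1)\<close>, the
  first \<open>N\<close> terms are controlled by the mass of \<open>g\<^sub>0, \<dots>, g\<^sub>N\<^sub>-\<^sub>1\<close> on \<open>[R, R + 1)\<close>, the
  others by a bound \<open>c\<close> on their coefficients and uniform discreteness.\<close>

lemma subinterval_coeff_sum_le:
  assumes f: "integrable lborel f" and \<delta>: "0 < \<delta>" and sep: "\<forall>i j. i \<noteq> j \<longrightarrow> \<delta> \<le> \<bar>lam i - lam j\<bar>"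
    and m: "0 < m" and c: "0 \<le> c"
    and small: "\<And>k i. k < m \<Longrightarrow> N \<le> i \<Longrightarrow> \<bar>coeff i (indicator (subinterval R m k))\<bar> \<le> c"
  shows "(\<Sum>k<m. \<Sum>i<n. coeff i (indicator (subinterval R m k))
      * (\<integral>t. indicator (subinterval R m k) t * translate f (lam i) t \<partial>lborel))
    \<le> (\<integral>t. \<bar>f t\<bar> \<partial>lborel) * (\<Sum>i<N. \<integral>t. \<bar>g i t\<bar> * indicator {R..<R+1} t \<partial>lborel)
      + c * ((\<integral>t. \<bar>f t\<bar> \<partial>lborel) * (1 / \<delta> + 1))"
proof -
  define F where "F = (\<integral>t. \<bar>f t\<bar> \<partial>lborel)"
  define a where "a i k = coeff i (indicator (subinterval R m k))" for i k
  define b where "b i k = (\<integral>t. indicator (subinterval R m k) t * translate f (lam i) t \<partial>lborel)" for i k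
  define G where "G i k = (\<integral>t. \<bar>g i t\<bar> * indicator (subinterval R m k) t \<partial>lborel)" for i k
  define X where "X i k = (\<integral>t. \<bar>f (t - lam i)\<bar> * indicator (subinterval R m k) t \<partial>lborel)" for i k
  have f_on: "integrable lborel (\<lambda>t. \<bar>f (t - lam i)\<bar> * indicator S t)"
    if "S \<in> sets lborel" "emeasure lborel S < \<infinity>" for i S
    using in_Lp_integrable_on(1)[OF p in_Lp_translate[OF in_Lp_f] that] by (simp add: translate_def)
  have X_le: "X i k \<le> F" for i k
    unfolding X_def F_def using f subinterval_finite_measure(1) by (rule integral_abs_translate_indicator_le)
  have F0: "0 \<le> F" unfolding F_def by (intro integral_nonneg_AE) auto
  have term_le: "a i k * b i k \<le> (if i < N then F * G i k else 0) + c * X i k" if "k < m" for i k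
  proof -
    have ab: "a i k * b i k \<le> \<bar>a i k\<bar> * X i k"
      unfolding a_def b_def X_def by (rule coeff_mul_integral_le)
    have "0 \<le> X i k" unfolding X_def by (intro integral_nonneg_AE) auto
    show ?thesis
    proof (cases "i < N")
      case True
      have "\<bar>a i k\<bar> * X i k \<le> G i k * F"
        unfolding a_def G_def using abs_coeff_indicator_le X_le \<open>0 \<le> X i k\<close> by (intro mult_mono) auto
      then show ?thesis using True ab c \<open>0 \<le> X i k\<close> by (simp add: mult.commute add_increasing2)
    next
      case False
      then have "\<bar>a i k\<bar> * X i k \<le> c * X i k"
        using small[OF that] \<open>0 \<le> X i k\<close> unfolding a_def by (intro mult_right_mono) auto
      then show ?thesis using False ab by simp
    qed
  qed
  have "(\<Sum>k<m. \<Sum>i<n. a i k * b i k) \<le> (\<Sum>k<m. \<Sum>i<n. (if i < N then F * G i k else 0) + c * X i k)"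
    using term_le by (intro sum_mono) auto
  also have "\<dots> = (\<Sum>i<n. if i < N then F * (\<Sum>k<m. G i k) else 0) + c * (\<Sum>i<n. \<Sum>k<m. X i k)"
  proof -
    have "(\<Sum>k<m. \<Sum>i<n. (if i < N then F * G i k else 0) + c * X i k)
        = (\<Sum>k<m. \<Sum>i<n. (if i < N then F * G i k else 0)) + c * (\<Sum>k<m. \<Sum>i<n. X i k)"
      by (simp add: sum.distrib sum_distrib_left)
    also have "(\<Sum>k<m. \<Sum>i<n. (if i < N then F * G i k else 0))
        = (\<Sum>i<n. \<Sum>k<m. (if i < N then F * G i k else 0))"
      by (rule sum.swap)
    also have "\<dots> = (\<Sum>i<n. (if i < N then F * (\<Sum>k<m. G i k) else 0))"
      by (intro sum.cong refl) (auto simp: sum_distrib_left)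
    also have "(\<Sum>k<m. \<Sum>i<n. X i k) = (\<Sum>i<n. \<Sum>k<m. X i k)" by (rule sum.swap)
    finally show ?thesis .
  qed
  also have "(\<Sum>i<n. if i < N then F * (\<Sum>k<m. G i k) else 0) \<le> F * (\<Sum>i<N. \<Sum>k<m. G i k)"
  proof -
    have "(\<Sum>i<n. if i < N then F * (\<Sum>k<m. G i k) else 0) = (\<Sum>i<min n N. F * (\<Sum>k<m. G i k))"
      by (rule sum.mono_neutral_cong_right) auto
    also have "\<dots> \<le> (\<Sum>i<N. F * (\<Sum>k<m. G i k))"
      using F0 by (intro sum_mono2) (auto simp: G_def intro!: mult_nonneg_nonneg sum_nonneg integral_nonneg_AE)
    finally show ?thesis by (simp add: sum_distrib_left)
  qed
  also have "(\<Sum>i<N. \<Sum>k<m. G i k) = (\<Sum>i<N. \<integral>t. \<bar>g i t\<bar> * indicator {R..<R+1} t \<partial>lborel)"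
    unfolding G_def using integrable_abs_g_on by (intro sum.cong sum_integral_subinterval[OF m]) auto
  also have "(\<Sum>i<n. \<Sum>k<m. X i k) = (\<Sum>i<n. \<integral>t. \<bar>f (t - lam i)\<bar> * indicator {R..<R+1} t \<partial>lborel)"
    unfolding X_def using f_on by (intro sum.cong sum_integral_subinterval[OF m]) auto
  also have "c * \<dots> \<le> c * (F * (1 / \<delta> + 1))"
    unfolding F_def using sum_integral_translates_le[OF f \<delta> sep, where r=1] c
    by (intro mult_left_mono) auto
  finally show ?thesis unfolding a_def b_def F_def by simp
qed

lemma exists_far_interval_small_g:
  assumes \<epsilon>: "0 < \<epsilon>"
  shows "\<exists>R\<ge>R0. (\<Sum>i<N. \<integral>t. \<bar>g i t\<bar> * indicator {R..<R+1} t \<partial>lborel) \<le> \<epsilon>"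
proof -
  have "eventually (\<lambda>n::nat. \<forall>i\<in>{..<N}. \<forall>W. W \<in> sets lborel \<longrightarrow> W \<subseteq> {real n..} \<longrightarrow>
      emeasure lborel W \<le> ennreal 1 \<longrightarrow> (\<integral>t. \<bar>g i t\<bar> * indicator W t \<partial>lborel) \<le> \<epsilon> / (N + 1)) sequentially"
    using \<epsilon> by (intro eventually_ball_finite ballI eventually_tail_integral_le[OF q in_Lq_g]) auto
  moreover have "eventually (\<lambda>n::nat. R0 \<le> real n) sequentially"
    by (rule eventually_sequentiallyI[of "nat \<lceil>R0\<rceil>"]) linarith
  ultimately have "eventually (\<lambda>n::nat. R0 \<le> real n \<and> (\<forall>i\<in>{..<N}. \<forall>W. W \<in> sets lborel \<longrightarrow>
      W \<subseteq> {real n..} \<longrightarrow> emeasure lborel W \<le> ennreal 1 \<longrightarrow>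
      (\<integral>t. \<bar>g i t\<bar> * indicator W t \<partial>lborel) \<le> \<epsilon> / (N + 1))) sequentially"
    by (simp add: eventually_conj)
  then obtain n :: nat where n: "R0 \<le> real n" and tails: "\<forall>i\<in>{..<N}. \<forall>W. W \<in> sets lborel \<longrightarrow>
      W \<subseteq> {real n..} \<longrightarrow> emeasure lborel W \<le> ennreal 1 \<longrightarrow>
      (\<integral>t. \<bar>g i t\<bar> * indicator W t \<partial>lborel) \<le> \<epsilon> / (N + 1)"
    unfolding eventually_sequentially by blast
  then have tail: "(\<integral>t. \<bar>g i t\<bar> * indicator {real n..<real n + 1} t \<partial>lborel) \<le> \<epsilon> / (N + 1)"
    if "i < N" for i
  proof -
    have "{real n..<real n + 1} \<in> sets lborel" "{real n..<real n + 1} \<subseteq> {real n..}"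
      "emeasure lborel {real n..<real n + 1} \<le> ennreal 1" by auto
    then show ?thesis using tails that by blast
  qed
  have "(\<Sum>i<N. \<integral>t. \<bar>g i t\<bar> * indicator {real n..<real n + 1} t \<partial>lborel) \<le> (\<Sum>i<N. \<epsilon> / (N + 1))"
    using tail by (intro sum_mono) auto
  also have "\<dots> \<le> \<epsilon>" using \<epsilon> by (simp add: field_simps)
  finally show ?thesis using n by blast
qed

lemma large_coeff_on_subintervals:
  assumes f: "integrable lborel f" and "uniformly_discrete_seq lam"
  obtains \<kappa> where "0 < \<kappa>"
    and "\<And>R0 m N. 0 < m \<Longrightarrow> \<exists>R\<ge>R0. \<exists>k<m. \<exists>i\<ge>N. \<kappa> \<le> \<bar>coeff i (indicator (subinterval R m k))\<bar>"
proof -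
  obtain \<delta> where \<delta>: "0 < \<delta>" and sep: "\<forall>i j. i \<noteq> j \<longrightarrow> \<delta> \<le> \<bar>lam i - lam j\<bar>"
    using assms(2) unfolding uniformly_discrete_seq_def by blast
  define F where "F = (\<integral>t. \<bar>f t\<bar> \<partial>lborel)"
  have F0: "0 \<le> F" unfolding F_def by (intro integral_nonneg_AE) auto
  define \<kappa> where "\<kappa> = 1 / (4 * (F + 1) * (1 / \<delta> + 1))"
  have \<kappa>0: "0 < \<kappa>" unfolding \<kappa>_def using F0 \<delta> by (simp add: add_pos_pos)
  have "0 < 1 / \<delta> + 1" using \<delta> by (simp add: add_pos_pos)
  then have \<kappa>F: "\<kappa> * (F * (1 / \<delta> + 1)) = F / (4 * (F + 1))"
    unfolding \<kappa>_def by simp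
  show ?thesis
  proof (rule that[OF \<kappa>0])
    fix R0 :: real and m N :: nat assume m: "0 < m"
    obtain R where R: "R0 \<le> R"
      and tail: "(\<Sum>i<N. \<integral>t. \<bar>g i t\<bar> * indicator {R..<R+1} t \<partial>lborel) \<le> 1 / (4 * (F + 1))"
      using exists_far_interval_small_g[of "1 / (4 * (F + 1))"] F0 by auto
    show "\<exists>R\<ge>R0. \<exists>k<m. \<exists>i\<ge>N. \<kappa> \<le> \<bar>coeff i (indicator (subinterval R m k))\<bar>"
    proof (rule ccontr)
      assume "\<not> ?thesis"
      then have small: "\<bar>coeff i (indicator (subinterval R m k))\<bar> \<le> \<kappa>" if "k < m" "N \<le> i" for k i
        using R that by force
      define S where "S n = (\<Sum>k<m. \<Sum>i<n. coeff i (indicator (subinterval R m k))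
          * (\<integral>t. indicator (subinterval R m k) t * translate f (lam i) t \<partial>lborel))" for n
      have "S \<longlonglongrightarrow> (\<Sum>k<m. measure lborel (subinterval R m k))"
        unfolding S_def by (intro tendsto_sum coeff_integral_sum_tendsto subinterval_finite_measure)
      also have "(\<Sum>k<m. measure lborel (subinterval R m k)) = 1"
        using emeasure_subinterval[OF m] m by (simp add: measure_def)
      finally have "S \<longlonglongrightarrow> 1" .
      moreover have "S n \<le> F / (4 * (F + 1)) + F / (4 * (F + 1))" for n
      proof -
        have "S n \<le> F * (\<Sum>i<N. \<integral>t. \<bar>g i t\<bar> * indicator {R..<R+1} t \<partial>lborel) + \<kappa> * (F * (1 / \<delta> + 1))"
          unfolding S_def F_def using subinterval_coeff_sum_le[OF f \<delta> sep m _ small] \<kappa>0 by simp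
        also have "F * (\<Sum>i<N. \<integral>t. \<bar>g i t\<bar> * indicator {R..<R+1} t \<partial>lborel) \<le> F / (4 * (F + 1))"
          using mult_left_mono[OF tail F0] by simp
        finally show ?thesis using \<kappa>F by simp
      qed
      ultimately have "1 \<le> F / (4 * (F + 1)) + F / (4 * (F + 1))"
        by (intro LIMSEQ_le_const2) auto
      moreover have "F / (4 * (F + 1)) < 1 / 4" using F0 by (simp add: field_simps)
      ultimately show False by linarith
    qed
  qed
qed


definition good_piece :: "real \<Rightarrow> nat \<Rightarrow> real \<Rightarrow> real set \<Rightarrow> real \<Rightarrow> real set \<Rightarrow> nat \<Rightarrow> bool"
  where "good_piece \<kappa> n R V R' I i \<longleftrightarrow> R \<le> R' \<and> I \<in> sets lborel \<and> I \<subseteq> {R..<R'}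
    \<and> emeasure lborel I = ennreal ((1 / 2) ^ n) \<and> n \<le> i \<and> \<kappa> \<le> \<bar>coeff i (indicator I)\<bar>
    \<and> \<bar>coeff i (indicator V)\<bar> \<le> \<kappa> / 4
    \<and> (\<forall>W. W \<in> sets lborel \<longrightarrow> W \<subseteq> {R'..} \<longrightarrow> emeasure lborel W \<le> ennreal 2
        \<longrightarrow> (\<integral>t. \<bar>g i t\<bar> * indicator W t \<partial>lborel) \<le> \<kappa> / 4)"

lemma exists_good_piece:
  assumes \<kappa>: "0 < \<kappa>"
    and large: "\<And>R0 m N. 0 < m \<Longrightarrow> \<exists>R\<ge>R0. \<exists>k<m. \<exists>i\<ge>N. \<kappa> \<le> \<bar>coeff i (indicator (subinterval R m k))\<bar>"
    and V: "V \<in> sets lborel" "V \<subseteq> {0..<R}"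
  shows "\<exists>I i R'. good_piece \<kappa> n R V R' I i"
proof -
  have "emeasure lborel V \<le> emeasure lborel {0..<R}" using V by (intro emeasure_mono) auto
  moreover have "emeasure lborel {0..<R} < \<infinity>" by (cases "0 \<le> R") auto
  ultimately have "emeasure lborel V < \<infinity>" by (simp add: le_less_trans)
  then have "in_Lp p (indicator V :: real \<Rightarrow> real)" using p V by (intro in_Lp_indicator) auto
  then have "eventually (\<lambda>i. dist (coeff i (indicator V)) 0 < \<kappa> / 4) sequentially"
    using \<kappa> by (intro tendstoD coeff_tendsto_0) auto
  then obtain N where N: "\<And>i. N \<le> i \<Longrightarrow> \<bar>coeff i (indicator V)\<bar> < \<kappa> / 4"
    unfolding eventually_sequentially by auto
  obtain R'' k i where R'': "R \<le> R''" and k: "k < 2 ^ n" and i: "max N n \<le> i"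
    and big: "\<kappa> \<le> \<bar>coeff i (indicator (subinterval R'' (2 ^ n) k))\<bar>"
    using large[of "2 ^ n" R "max N n"] by auto
  define I where "I = subinterval R'' (2 ^ n) k"
  have "eventually (\<lambda>n'::nat. \<forall>W. W \<in> sets lborel \<longrightarrow> W \<subseteq> {real n'..} \<longrightarrow>
      emeasure lborel W \<le> ennreal 2 \<longrightarrow> (\<integral>t. \<bar>g i t\<bar> * indicator W t \<partial>lborel) \<le> \<kappa> / 4) sequentially"
    using \<kappa> by (intro eventually_tail_integral_le[OF q in_Lq_g]) auto
  moreover have "eventually (\<lambda>n'::nat. R'' + 1 \<le> real n') sequentially"
    by (rule eventually_sequentiallyI[of "nat \<lceil>R'' + 1\<rceil>"]) linarith
  ultimately have "eventually (\<lambda>n'::nat. (\<forall>W. W \<in> sets lborel \<longrightarrow> W \<subseteq> {real n'..} \<longrightarrow>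
      emeasure lborel W \<le> ennreal 2 \<longrightarrow> (\<integral>t. \<bar>g i t\<bar> * indicator W t \<partial>lborel) \<le> \<kappa> / 4)
      \<and> R'' + 1 \<le> real n') sequentially"
    by (rule eventually_conj)
  then obtain n' :: nat where tail: "\<forall>W. W \<in> sets lborel \<longrightarrow> W \<subseteq> {real n'..} \<longrightarrow>
      emeasure lborel W \<le> ennreal 2 \<longrightarrow> (\<integral>t. \<bar>g i t\<bar> * indicator W t \<partial>lborel) \<le> \<kappa> / 4"
    and n': "R'' + 1 \<le> real n'"
    unfolding eventually_sequentially by blast
  have "I \<subseteq> {R..<real n'}"
    using subinterval_subset[OF k, of R''] R'' n' unfolding I_def by auto
  moreover have "emeasure lborel I = ennreal ((1 / 2) ^ n)"
    unfolding I_def by (simp add: emeasure_subinterval power_one_over)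
  moreover have "R \<le> real n'" using R'' n' by simp
  moreover have "I \<in> sets lborel" "n \<le> i" "\<kappa> \<le> \<bar>coeff i (indicator I)\<bar>"
    "\<bar>coeff i (indicator V)\<bar> \<le> \<kappa> / 4"
    using subinterval_finite_measure(1) N[of i] i big unfolding I_def by auto
  ultimately show ?thesis using tail unfolding good_piece_def by blast
qed

lemma good_piece_sequence:
  assumes \<kappa>: "0 < \<kappa>"
    and large: "\<And>R0 m N. 0 < m \<Longrightarrow> \<exists>R\<ge>R0. \<exists>k<m. \<exists>i\<ge>N. \<kappa> \<le> \<bar>coeff i (indicator (subinterval R m k))\<bar>"
  obtains I :: "nat \<Rightarrow> real set" and i :: "nat \<Rightarrow> nat" and R :: "nat \<Rightarrow> real"
  where "\<And>n. good_piece \<kappa> n (R n) (\<Union>l<n. I l) (R (Suc n)) (I n) (i n)"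
proof -
  \<comment> \<open>the state \<open>(R, V)\<close> records the current right end and the union of the pieces so far\<close>
  define P where "P n x \<longleftrightarrow> (n = 0 \<longrightarrow> x = (0, {})) \<and> 0 \<le> fst x \<and> snd x \<in> sets lborel
    \<and> snd x \<subseteq> {0..<fst x}"
    for n :: nat and x :: "real \<times> real set"
  define Q where "Q n x y \<longleftrightarrow> (\<exists>I i. good_piece \<kappa> n (fst x) (snd x) (fst y) I i \<and> snd y = snd x \<union> I)"
    for n :: nat and x y :: "real \<times> real set"
  have "\<exists>y. P (Suc n) y \<and> Q n x y" if "P n x" for n x
  proof -
    obtain R V where x: "x = (R, V)" by (cases x)
    have V: "V \<in> sets lborel" "V \<subseteq> {0..<R}" and R: "0 \<le> R" using that x unfolding P_def by auto
    then obtain I i R' where good: "good_piece \<kappa> n R V R' I i"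
      using exists_good_piece[OF \<kappa> large V, of n] by blast
    then have "R \<le> R'" "I \<in> sets lborel" "I \<subseteq> {R..<R'}" unfolding good_piece_def by blast+
    then have "P (Suc n) (R', V \<union> I)" using V R unfolding P_def by fastforce
    moreover have "Q n x (R', V \<union> I)" unfolding Q_def x fst_conv snd_conv using good by blast
    ultimately show ?thesis by blast
  qed
  moreover have "P 0 (0, {})" unfolding P_def by simp
  ultimately obtain x where x: "\<And>n. P n (x n) \<and> Q n (x n) (x (Suc n))"
    using dependent_nat_choice[of P Q] by blast
  have "\<forall>n. \<exists>z. good_piece \<kappa> n (fst (x n)) (snd (x n)) (fst (x (Suc n))) (fst z) (snd z)
      \<and> snd (x (Suc n)) = snd (x n) \<union> fst z"
  proof
    fix n
    obtain I i where "good_piece \<kappa> n (fst (x n)) (snd (x n)) (fst (x (Suc n))) I i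
        \<and> snd (x (Suc n)) = snd (x n) \<union> I"
      using x[of n] unfolding Q_def by blast
    then show "\<exists>z. good_piece \<kappa> n (fst (x n)) (snd (x n)) (fst (x (Suc n))) (fst z) (snd z)
        \<and> snd (x (Suc n)) = snd (x n) \<union> fst z"
      by (intro exI[of _ "(I, i)"]) simp
  qed
  then obtain z where z: "\<And>n. good_piece \<kappa> n (fst (x n)) (snd (x n)) (fst (x (Suc n))) (fst (z n)) (snd (z n))
      \<and> snd (x (Suc n)) = snd (x n) \<union> fst (z n)"
    by (metis choice)
  have "snd (x n) = (\<Union>l<n. fst (z l))" for n
  proof (induction n)
    case 0
    then show ?case using x[of 0] unfolding P_def by simp
  next
    case (Suc n)
    then show ?case using z[of n] by (simp add: lessThan_Suc Un_commute)
  qed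
  then show ?thesis using z by (intro that[of "\<lambda>n. fst (x n)" "\<lambda>n. fst (z n)" "\<lambda>n. snd (z n)"]) simp
qed

lemma not_integrable_or_not_uniformly_discrete:
  "\<not> (integrable lborel f \<and> uniformly_discrete_seq lam)"
proof
  assume "integrable lborel f \<and> uniformly_discrete_seq lam"
  then obtain \<kappa> where \<kappa>: "0 < \<kappa>"
    and large: "\<And>R0 m N. 0 < m \<Longrightarrow> \<exists>R\<ge>R0. \<exists>k<m. \<exists>i\<ge>N. \<kappa> \<le> \<bar>coeff i (indicator (subinterval R m k))\<bar>"
    using large_coeff_on_subintervals by blast
  show False
  proof (rule good_piece_sequence[OF \<kappa> large])
    fix R I i
    assume "\<And>n. good_piece \<kappa> n (R n) (\<Union>l<n. I l) (R (Suc n)) (I n) (i n)"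
    then have I: "\<And>n. I n \<in> sets lborel" "\<And>n. I n \<subseteq> {R n..<R (Suc n)}"
      and R: "\<And>n. R n \<le> R (Suc n)"
      and measure_I: "\<And>n. emeasure lborel (I n) = ennreal ((1 / 2) ^ n)"
      and i: "\<And>n. n \<le> i n"
      and coeff_I: "\<And>n. \<kappa> \<le> \<bar>coeff (i n) (indicator (I n))\<bar>"
      and coeff_before: "\<And>n. \<bar>coeff (i n) (indicator (\<Union>l<n. I l))\<bar> \<le> \<kappa> / 4"
      and coeff_after: "\<And>n W. W \<in> sets lborel \<Longrightarrow> W \<subseteq> {R (Suc n)..} \<Longrightarrow>
        emeasure lborel W \<le> ennreal 2 \<Longrightarrow> (\<integral>t. \<bar>g (i n) t\<bar> * indicator W t \<partial>lborel) \<le> \<kappa> / 4"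
      unfolding good_piece_def by blast+
    define U where "U = (\<Union>n. I n)"
    define V where "V n = (\<Union>l<n. I l)" for n
    define W where "W n = (\<Union>l\<in>{Suc n..}. I l)" for n
    have sets: "U \<in> sets lborel" "V n \<in> sets lborel" "W n \<in> sets lborel" for n
      unfolding U_def V_def W_def using I(1) by auto
    have measure_le: "emeasure lborel S \<le> ennreal 2" if "S \<subseteq> U" for S
      using emeasure_mono[OF that sets(1)] emeasure_UN_geometric_le[OF I(1) measure_I]
      unfolding U_def by simp
    have finite: "emeasure lborel S < \<infinity>" if "S \<subseteq> U" for S
      by (rule le_less_trans[OF measure_le[OF that]]) simp
    have W_after: "W n \<subseteq> {R (Suc n)..}" for n
      unfolding W_def by (rule UN_later_subset[where I=I and R=R, OF I(2) R])
    note ind = indicator_UN_split[where I=I and R=R, OF I(2) R, folded U_def V_def W_def]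
    have "in_Lp p (indicator U :: real \<Rightarrow> real)"
      using p sets(1) finite[of U] by (intro in_Lp_indicator) auto
    then have "eventually (\<lambda>j. dist (coeff j (indicator U)) 0 < \<kappa> / 2) sequentially"
      using \<kappa> by (intro tendstoD coeff_tendsto_0) auto
    then obtain N where N: "\<And>j. N \<le> j \<Longrightarrow> \<bar>coeff j (indicator U)\<bar> < \<kappa> / 2"
      unfolding eventually_sequentially by auto
    have integrable_on: "integrable lborel (\<lambda>s. indicator S s * g j s)" if "S \<subseteq> U" "S \<in> sets lborel" for S j
      using in_Lp_integrable_on(2)[OF q in_Lq_g that(2) finite[OF that(1)]] .
    have subsets: "V N \<subseteq> U" "I N \<subseteq> U" "W N \<subseteq> U" unfolding U_def V_def W_def by auto
    have "coeff (i N) (indicator U) = (\<integral>s. indicator (V N) s * g (i N) s + indicator (I N) s * g (i N) s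
        + indicator (W N) s * g (i N) s \<partial>lborel)"
      by (intro Bochner_Integration.integral_cong refl) (simp add: ind[where n=N] distrib_right)
    also have "\<dots> = coeff (i N) (indicator (V N)) + coeff (i N) (indicator (I N))
        + coeff (i N) (indicator (W N))"
      using integrable_on[OF subsets(1) sets(2)] integrable_on[OF subsets(2) I(1)]
        integrable_on[OF subsets(3) sets(3)]
      by (simp add: Bochner_Integration.integral_add)
    finally have "coeff (i N) (indicator U) = coeff (i N) (indicator (V N)) + coeff (i N) (indicator (I N))
        + coeff (i N) (indicator (W N))" .
    moreover have "\<bar>coeff (i N) (indicator (W N))\<bar> \<le> \<kappa> / 4"
      using abs_coeff_indicator_le[where i="i N" and S="W N"] coeff_after[OF sets(3) W_after measure_le[OF subsets(3)]]
      by linarith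
    ultimately have "\<kappa> / 2 \<le> \<bar>coeff (i N) (indicator U)\<bar>"
      using coeff_I[of N] coeff_before[of N] unfolding V_def by linarith
    then show False using N[OF i] by linarith
  qed
qed

end

theorem proposition2p2:
  fixes p q :: real and f :: "real \<Rightarrow> real" and lam :: "nat \<Rightarrow> real"
  assumes "1 < p" and "1 / p + 1 / q = 1"
    and "in_Lp p f" and "integrable lborel f"
    and "inj lam" and "uniformly_discrete_seq lam"
  shows "\<not> (fundamental_Lp p (\<lambda>i. translate f (lam i)) \<and>
            bounded_minimal_Lp p (\<lambda>i. translate f (lam i)))
         \<and> \<not> (\<exists>g. (\<forall>i. in_Lp q (g i)) \<and> Lp_frame p (\<lambda>i. translate f (lam i)) g)"
proof
  show "\<not> (fundamental_Lp p (\<lambda>i. translate f (lam i)) \<and> bounded_minimal_Lp p (\<lambda>i. translate f (lam i)))"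
    using translates_not_fundamental_bounded_minimal assms by simp
  show "\<not> (\<exists>g. (\<forall>i. in_Lp q (g i)) \<and> Lp_frame p (\<lambda>i. translate f (lam i)) g)"
  proof
    assume "\<exists>g. (\<forall>i. in_Lp q (g i)) \<and> Lp_frame p (\<lambda>i. translate f (lam i)) g"
    then obtain g where g: "\<And>i. in_Lp q (g i)" "Lp_frame p (\<lambda>i. translate f (lam i)) g" by blast
    have "0 < 1 / p" "1 / p < 1" using assms(1) by auto
    then have "0 < 1 / q" "1 / q < 1" using assms(2) by linarith+
    then have "1 \<le> q" by (simp add: zero_less_divide_1_iff divide_less_eq)
    then interpret translate_frame p q f lam g
      using assms g by unfold_locales auto
    show False using not_integrable_or_not_uniformly_discrete assms by blast
  qed
qed

end
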